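(* Let $p$ be a prime and $G=\mathbb{Z}\times\mathbb{Z}_p=\langle z\rangle\times\langle a\rangle$. Let $\mathcal{S}$ be a Schur ring over $G$ such that $\varphi(\mathcal{S})=F[\mathbb{Z}]^{\pm}$. If there is an $\mathcal{S}$-class $C$ with $|C|=2$ and $C\subseteq z\mathbb{Z}_p\cup z^{-1}\mathbb{Z}_p$, then $\mathcal{S}$ is an automorphic Schur ring.
   Context: $F$ is a field of characteristic $0$; $\mathbb{Z}=\langle z\rangle$ infinite cyclic, $\mathbb{Z}_p=\langle a\rangle$ cyclic of order $p$, written multiplicatively. For finite $C\subseteq G$, $\overline{C}=\sum_{g\in C}g$ and $C^*=\{g^{-1}:g\in C\}$. A Schur ring over $G$ is a subspace $\mathcal{S}=\mathrm{Span}_F\{\overline{C}:C\in\mathcal{D}\}$ of $F[G]$, where $\mathcal{D}=\mathcal{D}(\mathcal{S})$ is a partition of $G$ into finite subsets with $\{1\}\in\mathcal{D}$, $C\in\mathcal{D}\Rightarrow C^*\in\mathcal{D}$, and each $\overline{C}\,\overline{D}$ a finite $F$-linear combination of the $\overline{E}$, $E\in\mathcal{D}$; members of $\mathcal{D}$ are $\mathcal{S}$-classes. $\varphi:G\to\mathbb{Z}$ is the projection with kernel $\mathbb{Z}_p$, extended linearly to group algebras; $\varphi(\mathcal{S})$ is a Schur ring over $\mathbb{Z}$ with classes $\varphi(C)$, $C\in\mathcal{D}(\mathcal{S})$. $F[\mathbb{Z}]^{\pm}$ is the symmetric Schur ring over $\mathbb{Z}$, with classes $\{z^t,z^{-t}\}$,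 $t\in\mathbb{Z}$. $\mathcal{S}$ is automorphic if $\mathcal{S}=F[G]^{\mathcal{H}}$ (elements fixed by $\mathcal{H}$; classes are the $\mathcal{H}$-orbits) for some finite $\mathcal{H}\le\operatorname{Aut}(G)$. *)

theory Defs
  imports "HOL-Algebra.Bij" "HOL-Computational_Algebra.Primes"
begin

text \<open>The group G = Z x Z_p, written as pairs (t, i) with t :: int the exponent of z
  and i \<in> {0..<p} the exponent of a; the group law is componentwise addition, mod p in
  the second component.\<close>

definition Gc :: "nat \<Rightarrow> (int \<times> int) set" where
  "Gc p = UNIV \<times> {0..<int p}"

definition gmult :: "nat \<Rightarrow> int \<times> int \<Rightarrow> int \<times> int \<Rightarrow> int \<times> int" where
  "gmult p x y = (fst x + fst y, (snd x + snd y) mod int p)"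

definition ginv :: "nat \<Rightarrow> int \<times> int \<Rightarrow> int \<times> int" where
  "ginv p x = (- fst x, (- snd x) mod int p)"

definition Grp :: "nat \<Rightarrow> (int \<times> int) monoid" where
  "Grp p = \<lparr>carrier = Gc p, monoid.mult = gmult p, one = (0, 0)\<rparr>"

text \<open>The group algebra F[G]: finitely supported functions G \<rightarrow> F (zero outside G).\<close>

definition grpalg :: "'a itself \<Rightarrow> nat \<Rightarrow> (int \<times> int \<Rightarrow> 'a::field) set" where
  "grpalg F p = {f. finite {x. f x \<noteq> 0} \<and> {x. f x \<noteq> 0} \<subseteq> Gc p}"

definition conv :: "nat \<Rightarrow> (int \<times> int \<Rightarrow> 'a::field) \<Rightarrow> (int \<times> int \<Rightarrow> 'a) \<Rightarrow> int \<times> int \<Rightarrow> 'a" where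
  "conv p f g = (\<lambda>x. if x \<in> Gc p then (\<Sum>y\<in>{y. f y \<noteq> 0}. f y * g (gmult p (ginv p y) x)) else 0)"

text \<open>The element \<open>\<overline>C\<close> of F[G] for a finite subset C.\<close>

definition clsum :: "'a itself \<Rightarrow> (int \<times> int) set \<Rightarrow> (int \<times> int \<Rightarrow> 'a::field)" where
  "clsum F C = (\<lambda>x. if x \<in> C then 1 else 0)"

definition cspan :: "'a itself \<Rightarrow> (int \<times> int) set set \<Rightarrow> (int \<times> int \<Rightarrow> 'a::field) set" where
  "cspan F D = {f. \<exists>Es c. finite Es \<and> Es \<subseteq> D \<and>
       f = (\<lambda>x. \<Sum>E\<in>Es. c E * clsum F E x)}"

definition schur_classes :: "'a::field itself \<Rightarrow> nat \<Rightarrow> (int \<times> int) set set \<Rightarrow> bool" where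
  "schur_classes F p D \<longleftrightarrow>
     (\<forall>C\<in>D. finite C \<and> C \<noteq> {}) \<and>
     (\<forall>C\<in>D. \<forall>C'\<in>D. C \<noteq> C' \<longrightarrow> C \<inter> C' = {}) \<and>
     \<Union>D = Gc p \<and>
     {(0, 0)} \<in> D \<and>
     (\<forall>C\<in>D. ginv p ` C \<in> D) \<and>
     (\<forall>C\<in>D. \<forall>C'\<in>D. conv p (clsum F C) (clsum F C') \<in> cspan F D)"

text \<open>Classes of \<phi>(S): images of the S-classes under the projection G \<rightarrow> Z.\<close>

definition phi_classes :: "(int \<times> int) set set \<Rightarrow> int set set" where
  "phi_classes D = (\<lambda>C. fst ` C) ` D"

text \<open>Classes of the symmetric Schur ring F[Z]^\<pm>.\<close>

definition sym_classes :: "int set set" where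
  "sym_classes = {{t, - t} | t. True}"

definition fixed_alg :: "'a::field itself \<Rightarrow> nat \<Rightarrow> (int \<times> int \<Rightarrow> int \<times> int) set
    \<Rightarrow> (int \<times> int \<Rightarrow> 'a) set" where
  "fixed_alg F p H = {f \<in> grpalg F p. \<forall>\<sigma>\<in>H. \<forall>x\<in>Gc p. f (\<sigma> x) = f x}"

definition automorphic :: "'a::field itself \<Rightarrow> nat \<Rightarrow> (int \<times> int) set set \<Rightarrow> bool" where
  "automorphic F p D \<longleftrightarrow>
     (\<exists>H. finite H \<and> subgroup H (AutoGroup (Grp p)) \<and> cspan F D = fixed_alg F p H)"

end

theory Submission
  imports Defs "HOL-Number_Theory.Number_Theory"
begin

definition rotations :: "'b list \<Rightarrow> 'b list set" where
  "rotations xs = range (\<lambda>k. rotate k xs)"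

lemma rotations_rotate: "rotations (rotate k xs) = rotations xs"
proof
  show "rotations (rotate k xs) \<subseteq> rotations xs"
    by (auto simp: rotations_def rotate_rotate)
  show "rotations xs \<subseteq> rotations (rotate k xs)"
  proof
    fix ys assume "ys \<in> rotations xs"
    then obtain j where ys: "ys = rotate j xs" by (auto simp: rotations_def)
    show "ys \<in> rotations (rotate k xs)"
    proof (cases "xs = []")
      case True
      then show ?thesis using ys by (auto simp: rotations_def)
    next
      case False
      then have "j + length xs * k - k + k = j + length xs * k" by (cases xs) auto
      then have "rotate (j + length xs * k - k) (rotate k xs) = rotate (j + length xs * k) xs"
        by (simp only: rotate_rotate)
      also have "\<dots> = rotate j xs"
        by (simp add: rotate_add)
      finally have "ys = rotate (j + length xs * k - k) (rotate k xs)"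
        using ys by simp
      then show ?thesis unfolding rotations_def by blast
    qed
  qed
qed

lemma rotations_eq_if_mem:
  assumes "ys \<in> rotations xs" shows "rotations ys = rotations xs"
proof -
  obtain k where "ys = rotate k xs" using assms by (auto simp: rotations_def)
  then show ?thesis by (simp add: rotations_rotate)
qed

lemma rotate_mult_eq_self: "rotate d xs = xs \<Longrightarrow> rotate (d * a) xs = xs"
  by (induction a) (simp_all add: rotate_add)

lemma rotate1_eq_self_if_rotate_eq_self:
  assumes q: "prime (length xs)" and d: "rotate d xs = xs" "\<not> length xs dvd d"
  shows "rotate1 xs = xs"
proof -
  have "coprime d (length xs)"
    using d(2) q prime_imp_coprime_nat coprime_commute by blast
  then obtain a where "[d * a = Suc 0] (mod length xs)"
    using cong_solve_coprime_nat by blast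
  then have "(d * a) mod length xs = 1"
    using prime_gt_1_nat[OF q] by (simp add: cong_def)
  then show ?thesis
    using rotate_mult_eq_self[OF d(1), of a] rotate_conv_mod[of "d * a" xs] by simp
qed

lemma card_rotations:
  assumes q: "prime (length xs)" and nc: "rotate1 xs \<noteq> xs"
  shows "card (rotations xs) = length xs"
proof -
  have "rotations xs = (\<lambda>k. rotate k xs) ` {..<length xs}"
  proof
    show "rotations xs \<subseteq> (\<lambda>k. rotate k xs) ` {..<length xs}"
    proof
      fix ys assume "ys \<in> rotations xs"
      then obtain k where "ys = rotate k xs" by (auto simp: rotations_def)
      then have "ys = rotate (k mod length xs) xs" by (metis rotate_conv_mod)
      moreover have "k mod length xs < length xs" using prime_gt_0_nat[OF q] by simp
      ultimately show "ys \<in> (\<lambda>k. rotate k xs) ` {..<length xs}" by blast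
    qed
  qed (auto simp: rotations_def)
  moreover have "inj_on (\<lambda>k. rotate k xs) {..<length xs}"
  proof (rule linorder_inj_onI')
    fix k l assume kl: "k \<in> {..<length xs}" "l \<in> {..<length xs}" "k < l"
    show "rotate k xs \<noteq> rotate l xs"
    proof
      assume eq: "rotate k xs = rotate l xs"
      have "xs = rotate (length xs - k) (rotate k xs)"
        using kl by (simp add: rotate_rotate)
      also have "\<dots> = rotate (l - k + length xs) xs"
        unfolding eq using kl by (simp add: rotate_rotate) (simp add: add.commute)
      also have "\<dots> = rotate (l - k) (rotate (length xs) xs)"
        by (simp add: rotate_add)
      finally have "rotate (l - k) xs = xs" by simp
      moreover have "\<not> length xs dvd l - k"
        using kl by (auto dest: dvd_imp_le)
      ultimately show False
        using rotate1_eq_self_if_rotate_eq_self[OF q] nc by blast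
    qed
  qed
  ultimately show ?thesis by (simp add: card_image)
qed

lemma prime_dvd_card_if_rotate1_closed:
  assumes q: "prime q" and fin: "finite N"
    and len: "\<And>xs. xs \<in> N \<Longrightarrow> length xs = q"
    and closed: "\<And>xs. xs \<in> N \<Longrightarrow> rotate1 xs \<in> N"
    and nofix: "\<And>xs. xs \<in> N \<Longrightarrow> rotate1 xs \<noteq> xs"
  shows "q dvd card N"
proof -
  have rot_closed: "rotate k xs \<in> N" if "xs \<in> N" for k xs
    using that by (induction k) (auto simp: closed)
  have self: "xs \<in> rotations xs" for xs :: "'b list"
    unfolding rotations_def by (metis rangeI rotate0 id_apply)
  have cover: "\<Union>(rotations ` N) = N"
  proof
    show "\<Union>(rotations ` N) \<subseteq> N" using rot_closed by (auto simp: rotations_def)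
    show "N \<subseteq> \<Union>(rotations ` N)" using self by blast
  qed
  have "q * card (rotations ` N) = card (\<Union>(rotations ` N))"
  proof (rule card_partition)
    show "finite (rotations ` N)" "finite (\<Union>(rotations ` N))"
      using fin cover by simp_all
    show "card R = q" if R: "R \<in> rotations ` N" for R
    proof -
      obtain xs where "xs \<in> N" "R = rotations xs" using R by blast
      then show ?thesis using card_rotations[of xs] q len nofix by simp
    qed
    show "R \<inter> R' = {}" if "R \<in> rotations ` N" "R' \<in> rotations ` N" "R \<noteq> R'" for R R'
      using that rotations_eq_if_mem by blast
  qed
  then show ?thesis using cover by (metis dvd_triv_left)
qed

lemma rotate1_eq_self_iff_replicate:
  "rotate1 xs = xs \<longleftrightarrow> (\<exists>y. xs = replicate (length xs) y)"
proof
  assume fixed: "rotate1 xs = xs"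
  show "\<exists>y. xs = replicate (length xs) y"
  proof (cases "xs = []")
    case False
    then have "card (set xs) = 1" using rotate1_fixpoint_card[OF fixed] by simp
    then obtain y where "set xs = {y}" by (rule card_1_singletonE)
    then have "replicate (length xs) y = xs" by (intro replicate_length_same) simp
    then show ?thesis by metis
  qed simp
qed (metis rotate1_replicate)

lemma sum_list_rotate1: "sum_list (rotate1 xs) = sum_list (xs :: 'b::comm_monoid_add list)"
  by (cases xs) (simp_all add: add.commute)

definition gprod_list :: "nat \<Rightarrow> (int \<times> int) list \<Rightarrow> int \<times> int" where
  "gprod_list p xs = (sum_list (map fst xs), sum_list (map snd xs) mod int p)"

definition gpow :: "nat \<Rightarrow> nat \<Rightarrow> int \<times> int \<Rightarrow> int \<times> int" where
  "gpow p q y = (int q * fst y, (int q * snd y) mod int p)"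

lemma gprod_list_rotate1: "gprod_list p (rotate1 xs) = gprod_list p xs"
  by (simp add: gprod_list_def rotate1_map[symmetric] sum_list_rotate1)

lemma gprod_list_replicate: "gprod_list p (replicate q y) = gpow p q y"
  by (simp add: gprod_list_def gpow_def sum_list_replicate)

definition words :: "nat \<Rightarrow> nat \<Rightarrow> (int \<times> int) set \<Rightarrow> int \<times> int \<Rightarrow> (int \<times> int) list set" where
  "words p m X g = {xs. length xs = m \<and> set xs \<subseteq> X \<and> gprod_list p xs = g}"

lemma finite_words:
  assumes "finite X" shows "finite (words p m X g)"
proof -
  have "words p m X g \<subseteq> {xs. set xs \<subseteq> X \<and> length xs = m}" by (auto simp: words_def)
  then show ?thesis using finite_lists_length_eq[OF assms] by (rule finite_subset)
qed

lemma card_words_mod_prime: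
  assumes q: "prime q" and fin: "finite X" and inj: "inj_on (gpow p q) X"
  shows "card (words p q X g) mod q = (if g \<in> gpow p q ` X then 1 else 0)"
proof -
  let ?W = "words p q X g"
  define Fix where "Fix = {xs \<in> ?W. rotate1 xs = xs}"
  have q1: "q > 1" using q prime_gt_1_nat by blast
  have "q dvd card (?W - Fix)"
  proof (rule prime_dvd_card_if_rotate1_closed[OF q])
    show "finite (?W - Fix)" using finite_words[OF fin] by simp
    show "length xs = q" if "xs \<in> ?W - Fix" for xs using that by (simp add: words_def)
    show "rotate1 xs \<noteq> xs" if "xs \<in> ?W - Fix" for xs using that by (simp add: Fix_def)
    show "rotate1 xs \<in> ?W - Fix" if "xs \<in> ?W - Fix" for xs
      using that inj_eq[OF inj_rotate1, of "rotate1 xs" xs]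
      by (auto simp: Fix_def words_def gprod_list_rotate1)
  qed
  have "Fix = (\<lambda>y. replicate q y) ` {y \<in> X. gpow p q y = g}"
  proof
    show "Fix \<subseteq> (\<lambda>y. replicate q y) ` {y \<in> X. gpow p q y = g}"
    proof
      fix xs assume xs: "xs \<in> Fix"
      then have "rotate1 xs = xs" "length xs = q" by (auto simp: Fix_def words_def)
      then obtain y where y: "xs = replicate q y" using rotate1_eq_self_iff_replicate by metis
      then have "y \<in> X" "gpow p q y = g"
        using xs q1 by (auto simp: Fix_def words_def gprod_list_replicate)
      then show "xs \<in> (\<lambda>y. replicate q y) ` {y \<in> X. gpow p q y = g}" using y by blast
    qed
  qed (auto simp: Fix_def words_def gprod_list_replicate)
  moreover have "inj_on (\<lambda>y. replicate q y) {y \<in> X. gpow p q y = g}"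
    using q1 by (simp add: inj_on_def replicate_eq_replicate)
  moreover have "card {y \<in> X. gpow p q y = g} = (if g \<in> gpow p q ` X then 1 else 0)"
  proof (cases "g \<in> gpow p q ` X")
    case True
    then obtain y where "y \<in> X" "gpow p q y = g" by blast
    then have "{y \<in> X. gpow p q y = g} = {y}" using inj by (auto dest: inj_onD)
    then show ?thesis using True by simp
  next
    case False
    then have "{y \<in> X. gpow p q y = g} = {}" by blast
    then show ?thesis using False by (metis card.empty)
  qed
  ultimately have "card Fix = (if g \<in> gpow p q ` X then 1 else 0)"
    by (simp add: card_image)
  moreover have "card ?W = card Fix + card (?W - Fix)"
  proof -
    have "Fix \<subseteq> ?W" unfolding Fix_def by blast
    then show ?thesis
      using finite_words[OF fin] by (metis card_Diff_subset card_mono finite_subset le_add_diff_inverse)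
  qed
  moreover obtain k where "card (?W - Fix) = q * k"
    using \<open>q dvd card (?W - Fix)\<close> by (elim dvdE)
  ultimately show ?thesis using q1 by simp
qed

definition gdiv :: "nat \<Rightarrow> int \<times> int \<Rightarrow> int \<times> int \<Rightarrow> int \<times> int" where
  "gdiv p y g = (fst g - fst y, (snd g - snd y) mod int p)"

lemma gmult_ginv: "gmult p (ginv p y) g = gdiv p y g"
  by (simp add: gmult_def ginv_def gdiv_def mod_add_left_eq)

lemma mem_Gc_iff: "x \<in> Gc p \<longleftrightarrow> 0 \<le> snd x \<and> snd x < int p"
  by (cases x) (auto simp: Gc_def)

lemma gdiv_in_Gc: "p > 0 \<Longrightarrow> gdiv p y g \<in> Gc p"
  by (simp add: mem_Gc_iff gdiv_def)

lemma conv_clsum_clsum: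
  assumes "finite A" "g \<in> Gc p"
  shows "conv p (clsum F A) (clsum F B) g = of_nat (card {y \<in> A. gdiv p y g \<in> B})"
proof -
  have "{y. clsum F A y \<noteq> (0::'a)} = A" by (auto simp: clsum_def)
  then have "conv p (clsum F A) (clsum F B) g = (\<Sum>y\<in>A. clsum F A y * clsum F B (gdiv p y g))"
    using assms(2) by (simp add: conv_def gmult_ginv)
  also have "\<dots> = (\<Sum>y\<in>A. if gdiv p y g \<in> B then 1 else 0)"
    by (rule sum.cong) (auto simp: clsum_def)
  also have "\<dots> = of_nat (card {y \<in> A. gdiv p y g \<in> B})"
    using assms(1) by (simp add: sum.If_cases Int_def)
  finally show ?thesis .
qed

lemma gprod_list_Cons_eq_iff:
  assumes "g \<in> Gc p"
  shows "gprod_list p (y # xs) = g \<longleftrightarrow> gprod_list p xs = gdiv p y g"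
proof -
  obtain a b where g: "g = (a, b)" by (cases g)
  have b: "b mod int p = b" using assms g by (simp add: mem_Gc_iff)
  have "(snd y + s) mod int p = b \<longleftrightarrow> s mod int p = (b - snd y) mod int p" for s
  proof -
    have "(snd y + s) mod int p = b \<longleftrightarrow> int p dvd (snd y + s - b)"
      using b by (metis mod_eq_dvd_iff)
    also have "\<dots> \<longleftrightarrow> int p dvd (s - (b - snd y))" by (simp add: algebra_simps)
    also have "\<dots> \<longleftrightarrow> s mod int p = (b - snd y) mod int p" by (simp add: mod_eq_dvd_iff)
    finally show ?thesis .
  qed
  then show ?thesis by (auto simp: gprod_list_def gdiv_def g)
qed

lemma words_Suc:
  assumes "g \<in> Gc p"
  shows "words p (Suc m) X g = (\<Union>y\<in>X. (#) y ` words p m X (gdiv p y g))"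
proof
  show "words p (Suc m) X g \<subseteq> (\<Union>y\<in>X. (#) y ` words p m X (gdiv p y g))"
  proof
    fix zs assume "zs \<in> words p (Suc m) X g"
    then obtain y xs where "zs = y # xs" "y \<in> X" "xs \<in> words p m X (gdiv p y g)"
      using gprod_list_Cons_eq_iff[OF assms] by (cases zs) (auto simp: words_def)
    then show "zs \<in> (\<Union>y\<in>X. (#) y ` words p m X (gdiv p y g))" by blast
  qed
  show "(\<Union>y\<in>X. (#) y ` words p m X (gdiv p y g)) \<subseteq> words p (Suc m) X g"
    using gprod_list_Cons_eq_iff[OF assms] by (auto simp: words_def)
qed

lemma card_words_Suc:
  assumes "finite X" "g \<in> Gc p"
  shows "card (words p (Suc m) X g) = (\<Sum>y\<in>X. card (words p m X (gdiv p y g)))"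
  unfolding words_Suc[OF assms(2)]
  by (subst card_UN_disjoint) (auto simp: assms(1) finite_words card_image)

lemma inj_on_gpow:
  assumes p: "prime p" and q: "prime q" "q \<noteq> p"
  shows "inj_on (gpow p q) (Gc p)"
proof
  fix x y assume xy: "x \<in> Gc p" "y \<in> Gc p" "gpow p q x = gpow p q y"
  have "\<not> p dvd q"
    using primes_dvd_imp_eq[OF p q(1)] q(2) by blast
  then have "\<not> int p dvd int q" by simp
  moreover have "int p dvd int q * (snd x - snd y)"
    using xy(3) by (simp add: gpow_def mod_eq_dvd_iff algebra_simps)
  ultimately have "snd x mod int p = snd y mod int p"
    using p by (simp add: prime_dvd_mult_iff mod_eq_dvd_iff)
  then show "x = y"
    using xy q(1) prime_gt_0_nat[OF q(1)] by (simp add: prod_eq_iff mem_Gc_iff gpow_def)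
qed

locale schur_ring =
  fixes F :: "'a::field_char_0 itself" and p :: nat and D :: "(int \<times> int) set set"
  assumes prime_p: "prime p" and schur: "schur_classes F p D"
begin

lemma p_gt_1: "p > 1"
  using prime_p prime_gt_1_nat by blast

lemma p_gt_0: "p > 0"
  using p_gt_1 by simp

lemma int_p_gt_1: "int p > 1"
  using p_gt_1 by simp

lemma class_finite: "E \<in> D \<Longrightarrow> finite E"
  and class_nonempty: "E \<in> D \<Longrightarrow> E \<noteq> {}"
  and class_eqI: "E \<in> D \<Longrightarrow> E' \<in> D \<Longrightarrow> x \<in> E \<Longrightarrow> x \<in> E' \<Longrightarrow> E = E'"
  and Union_classes: "\<Union>D = Gc p"
  and zero_class: "{(0, 0)} \<in> D"
  and clsum_mult_in_cspan: "A \<in> D \<Longrightarrow> B \<in> D \<Longrightarrow> conv p (clsum F A) (clsum F B) \<in> cspan F D"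
  using schur unfolding schur_classes_def by blast+

lemma class_subset_Gc: "E \<in> D \<Longrightarrow> E \<subseteq> Gc p"
  using Union_classes by blast

definition the_class :: "int \<times> int \<Rightarrow> (int \<times> int) set" where
  "the_class x = (THE E. E \<in> D \<and> x \<in> E)"

lemma the_class_eq:
  assumes "E \<in> D" "x \<in> E" shows "the_class x = E"
  unfolding the_class_def
proof (rule the_equality)
  show "E' = E" if "E' \<in> D \<and> x \<in> E'" for E' using that assms class_eqI by blast
qed (use assms in blast)

lemma the_class_in_D: "x \<in> Gc p \<Longrightarrow> the_class x \<in> D"
  and mem_the_class: "x \<in> Gc p \<Longrightarrow> x \<in> the_class x"
  using Union_classes the_class_eq by blast+

lemma the_class_subset_Gc: "x \<in> Gc p \<Longrightarrow> y \<in> the_class x \<Longrightarrow> y \<in> Gc p"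
  using the_class_in_D class_subset_Gc by blast

definition class_const :: "(int \<times> int \<Rightarrow> 'b) \<Rightarrow> bool" where
  "class_const f \<longleftrightarrow> (\<forall>E\<in>D. \<forall>g\<in>E. \<forall>h\<in>E. f g = f h)"

lemma class_constD: "class_const f \<Longrightarrow> E \<in> D \<Longrightarrow> g \<in> E \<Longrightarrow> h \<in> E \<Longrightarrow> f g = f h"
  unfolding class_const_def by blast

lemma class_const_expansion:
  fixes f :: "int \<times> int \<Rightarrow> 'b::semiring_1"
  assumes fin: "finite {x. f x \<noteq> 0}" and const: "class_const f"
  obtains Es c where "finite Es" "Es \<subseteq> D"
    "\<And>x. x \<in> Gc p \<Longrightarrow> f x = (\<Sum>E\<in>Es. c E * (if x \<in> E then 1 else 0))"
proof -
  define Es where "Es = the_class ` ({x. f x \<noteq> 0} \<inter> Gc p)"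
  define c where "c E = f (SOME y. y \<in> E)" for E
  have "f x = (\<Sum>E\<in>Es. c E * (if x \<in> E then 1 else 0))" if x: "x \<in> Gc p" for x
  proof -
    have "(\<Sum>E\<in>Es. c E * (if x \<in> E then 1 else 0)) = (\<Sum>E\<in>Es. if E = the_class x then c E else 0)"
    proof (rule sum.cong)
      fix E assume "E \<in> Es"
      then have "x \<in> E \<longleftrightarrow> E = the_class x"
        unfolding Es_def using x the_class_in_D the_class_eq mem_the_class by blast
      then show "c E * (if x \<in> E then 1 else 0) = (if E = the_class x then c E else 0)"
        by simp
    qed simp
    also have "\<dots> = (if the_class x \<in> Es then c (the_class x) else 0)"
      using fin by (simp add: sum.delta Es_def)
    also have "\<dots> = f x"
    proof -
      have "(SOME y. y \<in> the_class x) \<in> the_class x"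
        using mem_the_class[OF x] by (rule someI)
      then have "c (the_class x) = f x"
        unfolding c_def using class_constD[OF const the_class_in_D[OF x]] mem_the_class[OF x] by blast
      moreover have "f x \<noteq> 0 \<Longrightarrow> the_class x \<in> Es" unfolding Es_def using x by blast
      ultimately show ?thesis by auto
    qed
    finally show ?thesis ..
  qed
  moreover have "finite Es" "Es \<subseteq> D"
    unfolding Es_def using fin the_class_in_D by auto
  ultimately show ?thesis using that by blast
qed

lemma cspan_eq: "cspan F D = {f \<in> grpalg F p. class_const f}"
proof (intro equalityI subsetI)
  fix f assume "f \<in> cspan F D"
  then obtain Es c where Es: "finite Es" "Es \<subseteq> D" and f: "f = (\<lambda>x. \<Sum>E\<in>Es. c E * clsum F E x)"
    unfolding cspan_def by blast
  have supp: "{x. f x \<noteq> 0} \<subseteq> \<Union>Es"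
  proof
    fix x assume "x \<in> {x. f x \<noteq> 0}"
    then have "(\<Sum>E\<in>Es. c E * clsum F E x) \<noteq> 0" by (simp add: f)
    then obtain E where "E \<in> Es" "c E * clsum F E x \<noteq> 0" by (meson sum.neutral)
    then show "x \<in> \<Union>Es" by (auto simp: clsum_def split: if_splits)
  qed
  have "finite (\<Union>Es)"
    using Es class_finite by (intro finite_Union) auto
  moreover have "\<Union>Es \<subseteq> Gc p"
    using Es class_subset_Gc by blast
  moreover have "class_const f"
    unfolding class_const_def
  proof (intro ballI)
    fix E g h assume "E \<in> D" "g \<in> E" "h \<in> E"
    then have "g \<in> E' \<longleftrightarrow> h \<in> E'" if "E' \<in> Es" for E'
      using that Es(2) class_eqI by blast
    then show "f g = f h" by (simp add: f clsum_def)
  qed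
  ultimately show "f \<in> {f \<in> grpalg F p. class_const f}"
    unfolding grpalg_def using supp finite_subset[OF supp] by auto
next
  fix f assume "f \<in> {f \<in> grpalg F p. class_const f}"
  then have fin: "finite {x. f x \<noteq> 0}" and supp: "{x. f x \<noteq> 0} \<subseteq> Gc p" and const: "class_const f"
    unfolding grpalg_def by auto
  obtain Es c where Es: "finite Es" "Es \<subseteq> D"
    and exp: "\<And>x. x \<in> Gc p \<Longrightarrow> f x = (\<Sum>E\<in>Es. c E * (if x \<in> E then 1 else 0))"
    using class_const_expansion[OF fin const] by blast
  have rep: "f x = (\<Sum>E\<in>Es. c E * clsum F E x)" for x
  proof (cases "x \<in> Gc p")
    case True
    then show ?thesis using exp[OF True] by (simp add: clsum_def)
  next
    case False
    then have "f x = 0" using supp by blast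
    moreover have "clsum F E x = 0" if "E \<in> Es" for E
      using that False Es(2) class_subset_Gc unfolding clsum_def by fastforce
    ultimately show ?thesis by simp
  qed
  then have "f = (\<lambda>x. \<Sum>E\<in>Es. c E * clsum F E x)"
    by (rule ext)
  then show "f \<in> cspan F D"
    unfolding cspan_def using Es by (intro CollectI exI[of _ Es] exI[of _ c]) simp
qed

lemma card_factorisations_class_const:
  assumes "A \<in> D" "B \<in> D"
  shows "class_const (\<lambda>g. card {y \<in> A. gdiv p y g \<in> B})"
  unfolding class_const_def
proof (intro ballI)
  fix E g h assume "E \<in> D" "g \<in> E" "h \<in> E"
  moreover have "class_const (conv p (clsum F A) (clsum F B))"
    using clsum_mult_in_cspan[OF assms] by (simp add: cspan_eq)
  ultimately have "conv p (clsum F A) (clsum F B) g = conv p (clsum F A) (clsum F B) h"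
    using class_constD by blast
  moreover have "g \<in> Gc p" "h \<in> Gc p"
    using \<open>E \<in> D\<close> \<open>g \<in> E\<close> \<open>h \<in> E\<close> class_subset_Gc by blast+
  ultimately show "card {y \<in> A. gdiv p y g \<in> B} = card {y \<in> A. gdiv p y h \<in> B}"
    using class_finite[OF assms(1)] by (simp add: conv_clsum_clsum)
qed

lemma factorisation_transfer:
  assumes "A \<in> D" "B \<in> D" "E \<in> D" "g \<in> E" "h \<in> E" and "y \<in> A" "gdiv p y g \<in> B"
  shows "\<exists>y'\<in>A. gdiv p y' h \<in> B"
proof -
  have "y \<in> {y \<in> A. gdiv p y g \<in> B}" "finite {y \<in> A. gdiv p y g \<in> B}"
    using assms(6,7) class_finite[OF assms(1)] by simp_all
  then have "card {y \<in> A. gdiv p y g \<in> B} \<noteq> 0"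
    by (metis card_eq_0_iff empty_iff)
  then have "card {y \<in> A. gdiv p y h \<in> B} \<noteq> 0"
    using class_constD[OF card_factorisations_class_const[OF assms(1,2)] assms(3-5)] by simp
  then have "{y \<in> A. gdiv p y h \<in> B} \<noteq> {}" by (metis card.empty)
  then show ?thesis by blast
qed

lemma singleton_class_gmult:
  assumes x: "{x} \<in> D" and y: "{y} \<in> D"
  shows "{gmult p x y} \<in> D"
proof -
  let ?g = "gmult p x y"
  have "x \<in> Gc p" "y \<in> Gc p" using x y class_subset_Gc by blast+
  then have g: "?g \<in> Gc p" and "gdiv p x ?g = y"
    using p_gt_1 by (auto simp: gmult_def gdiv_def mem_Gc_iff mod_diff_left_eq)
  have "h = ?g" if h: "h \<in> the_class ?g" for h
  proof -
    have "\<exists>x'\<in>{x}. gdiv p x' h \<in> {y}"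
      using factorisation_transfer[OF x y the_class_in_D[OF g] mem_the_class[OF g] h]
        \<open>gdiv p x ?g = y\<close> by simp
    moreover have "h \<in> Gc p" using h class_subset_Gc the_class_in_D[OF g] by blast
    ultimately show "h = ?g"
      by (cases h) (auto simp: gmult_def gdiv_def mem_Gc_iff mod_add_right_eq)
  qed
  then have "the_class ?g = {?g}" using mem_the_class[OF g] by blast
  then show ?thesis using the_class_in_D[OF g] by simp
qed

lemma sum_gdiv_class_const:
  fixes f :: "int \<times> int \<Rightarrow> nat"
  assumes fin: "finite {x. f x \<noteq> 0}" and const: "class_const f" and A: "A \<in> D"
  shows "class_const (\<lambda>g. \<Sum>y\<in>A. f (gdiv p y g))"
proof -
  obtain Es c where Es: "finite Es" "Es \<subseteq> D"
    and exp: "\<And>x. x \<in> Gc p \<Longrightarrow> f x = (\<Sum>E\<in>Es. c E * (if x \<in> E then 1 else 0))"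
    using class_const_expansion[OF fin const] by blast
  have expand: "(\<Sum>y\<in>A. f (gdiv p y g)) = (\<Sum>E\<in>Es. c E * card {y \<in> A. gdiv p y g \<in> E})" for g
  proof -
    have "(\<Sum>y\<in>A. f (gdiv p y g)) = (\<Sum>y\<in>A. \<Sum>E\<in>Es. c E * (if gdiv p y g \<in> E then 1 else 0))"
      using exp gdiv_in_Gc p_gt_1 by (intro sum.cong) auto
    also have "\<dots> = (\<Sum>E\<in>Es. \<Sum>y\<in>A. c E * (if gdiv p y g \<in> E then 1 else 0))"
      by (rule sum.swap)
    also have "\<dots> = (\<Sum>E\<in>Es. c E * card {y \<in> A. gdiv p y g \<in> E})"
      using class_finite[OF A] by (simp add: sum_distrib_left[symmetric] sum.If_cases Int_def)
    finally show ?thesis .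
  qed
  show ?thesis
    unfolding class_const_def
  proof (intro ballI)
    fix E g h assume "E \<in> D" "g \<in> E" "h \<in> E"
    then have "card {y \<in> A. gdiv p y g \<in> E'} = card {y \<in> A. gdiv p y h \<in> E'}" if "E' \<in> Es" for E'
      using that Es(2) class_constD[OF card_factorisations_class_const[OF A]] by blast
    then show "(\<Sum>y\<in>A. f (gdiv p y g)) = (\<Sum>y\<in>A. f (gdiv p y h))"
      unfolding expand by (intro sum.cong) simp_all
  qed
qed

lemma card_words_class_const:
  assumes X: "X \<in> D"
  shows "class_const (\<lambda>g. card (words p m X g))"
proof (induction m)
  case 0
  have words_0: "words p 0 X g = (if g = (0, 0) then {[]} else {})" for g
    by (auto simp: words_def gprod_list_def)
  show ?case
    unfolding class_const_def
  proof (intro ballI)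
    fix E g h assume "E \<in> D" "g \<in> E" "h \<in> E"
    moreover have "(0, 0) \<in> E \<Longrightarrow> E = {(0, 0)}"
      using class_eqI[OF \<open>E \<in> D\<close> zero_class] by simp
    ultimately have "g = (0, 0) \<longleftrightarrow> h = (0, 0)" by auto
    then show "card (words p 0 X g) = card (words p 0 X h)" by (simp add: words_0)
  qed
next
  case (Suc m)
  have "{g. card (words p m X g) \<noteq> 0} \<subseteq> gprod_list p ` {xs. set xs \<subseteq> X \<and> length xs = m}"
  proof
    fix g assume "g \<in> {g. card (words p m X g) \<noteq> 0}"
    then have "words p m X g \<noteq> {}" by auto
    then obtain xs where "xs \<in> words p m X g" by blast
    then show "g \<in> gprod_list p ` {xs. set xs \<subseteq> X \<and> length xs = m}"
      unfolding words_def by auto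
  qed
  then have "finite {g. card (words p m X g) \<noteq> 0}"
    by (rule finite_subset[OF _ finite_imageI[OF finite_lists_length_eq[OF class_finite[OF X]]]])
  then have sum_const: "class_const (\<lambda>g. \<Sum>y\<in>X. card (words p m X (gdiv p y g)))"
    by (rule sum_gdiv_class_const[OF _ Suc X])
  show ?case
    unfolding class_const_def
  proof (intro ballI)
    fix E g h assume gh: "E \<in> D" "g \<in> E" "h \<in> E"
    then have "g \<in> Gc p" "h \<in> Gc p" using class_subset_Gc by blast+
    then show "card (words p (Suc m) X g) = card (words p (Suc m) X h)"
      using class_constD[OF sum_const gh] by (simp add: card_words_Suc[OF class_finite[OF X]])
  qed
qed

lemma gpow_image_closed:
  assumes X: "X \<in> D" and q: "prime q" "q \<noteq> p"
    and E: "E \<in> D" "g \<in> E" "h \<in> E" and g: "g \<in> gpow p q ` X"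
  shows "h \<in> gpow p q ` X"
proof -
  have inj: "inj_on (gpow p q) X"
    using inj_on_subset[OF inj_on_gpow[OF prime_p q] class_subset_Gc[OF X]] .
  have "card (words p q X g) mod q = 1"
    using card_words_mod_prime[OF q(1) class_finite[OF X] inj, of g] by (simp only: if_P[OF g])
  moreover have "card (words p q X h) = card (words p q X g)"
    using class_constD[OF card_words_class_const[OF X] E(1,3,2)] .
  ultimately have "(if h \<in> gpow p q ` X then 1 else 0) = (1::nat)"
    using card_words_mod_prime[OF q(1) class_finite[OF X] inj, of h] by (simp only:)
  then show ?thesis by (metis zero_neq_one)
qed

end

definition aut_map :: "nat \<Rightarrow> int \<Rightarrow> int \<Rightarrow> int \<Rightarrow> int \<times> int \<Rightarrow> int \<times> int" where
  "aut_map p e c m x = (e * fst x, (c * fst x + m * snd x) mod int p)"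

lemma aut_map_in_Gc: "p > 0 \<Longrightarrow> aut_map p e c m x \<in> Gc p"
  by (simp add: aut_map_def mem_Gc_iff)

lemma mod_add_mult_mod_eq: "((a::int) + m * (b mod n)) mod n = (a + m * b) mod n"
  by (metis mod_add_right_eq mod_mult_right_eq)

lemma mod_mult_add_mult_mod_eq: "((a mod n) * x + (b mod n) * y) mod n = (a * x + b * y) mod (n::int)"
  by (metis mod_add_eq mod_mult_left_eq)

lemma aut_map_mod: "aut_map p e (c mod int p) (m mod int p) = aut_map p e c m"
  by (simp add: aut_map_def fun_eq_iff mod_mult_add_mult_mod_eq)

lemma aut_map_aut_map:
  "aut_map p e1 c1 m1 (aut_map p e2 c2 m2 x) = aut_map p (e1 * e2) (c1 * e2 + m1 * c2) (m1 * m2) x"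
proof -
  have "(c1 * (e2 * fst x) + m1 * ((c2 * fst x + m2 * snd x) mod int p)) mod int p
      = (c1 * (e2 * fst x) + m1 * (c2 * fst x + m2 * snd x)) mod int p"
    by (rule mod_add_mult_mod_eq)
  also have "\<dots> = ((c1 * e2 + m1 * c2) * fst x + (m1 * m2) * snd x) mod int p"
    by (simp add: algebra_simps)
  finally show ?thesis by (simp add: aut_map_def mult.assoc)
qed

lemma aut_map_eq_id:
  assumes "c mod int p = 0" "m mod int p = 1 mod int p" "x \<in> Gc p"
  shows "aut_map p 1 c m x = x"
proof -
  have "aut_map p 1 c m = aut_map p 1 0 1"
    using aut_map_mod[of p 1 c m] aut_map_mod[of p 1 0 1] assms(1,2) by simp
  then show ?thesis using assms(3) by (cases x) (simp add: aut_map_def mem_Gc_iff)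
qed

lemma aut_map_id: "x \<in> Gc p \<Longrightarrow> aut_map p 1 0 1 x = x"
  by (cases x) (simp add: aut_map_def mem_Gc_iff)

lemma aut_map_gmult: "aut_map p e c m (gmult p x y) = gmult p (aut_map p e c m x) (aut_map p e c m y)"
proof -
  have "(c * (fst x + fst y) + m * ((snd x + snd y) mod int p)) mod int p
      = (c * (fst x + fst y) + m * (snd x + snd y)) mod int p"
    by (rule mod_add_mult_mod_eq)
  also have "\<dots> = ((c * fst x + m * snd x) + (c * fst y + m * snd y)) mod int p"
    by (simp add: algebra_simps)
  also have "\<dots> = ((c * fst x + m * snd x) mod int p + (c * fst y + m * snd y) mod int p) mod int p"
    by (rule mod_add_eq[symmetric])
  finally show ?thesis by (simp add: aut_map_def gmult_def algebra_simps)
qed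

lemma aut_map_inverse:
  assumes e: "e \<in> {1, -1}" and m: "coprime m (int p)"
  obtains c' m' where "coprime m' (int p)"
    "\<And>x. x \<in> Gc p \<Longrightarrow> aut_map p e c' m' (aut_map p e c m x) = x"
    "\<And>x. x \<in> Gc p \<Longrightarrow> aut_map p e c m (aut_map p e c' m' x) = x"
proof -
  obtain m' where m': "[m * m' = 1] (mod int p)"
    using cong_solve_coprime_int[OF m] by blast
  define c' where "c' = - (m' * c * e)"
  have ee: "e * e = 1" using e by auto
  have "[m' * m = 1] (mod int p)" using m' by (simp add: mult.commute)
  then have "coprime m' (int p)" unfolding coprime_iff_invertible_int by blast
  moreover have "aut_map p e c' m' (aut_map p e c m x) = x" if "x \<in> Gc p" for x
  proof -
    have "c' * e + m' * c = m' * c * (1 - e * e)" by (simp add: c'_def algebra_simps)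
    then have "(c' * e + m' * c) mod int p = 0" using ee by simp
    moreover have "(m' * m) mod int p = 1 mod int p"
      using \<open>[m' * m = 1] (mod int p)\<close> by (simp add: cong_def)
    ultimately show ?thesis using aut_map_eq_id that by (simp add: aut_map_aut_map ee)
  qed
  moreover have "aut_map p e c m (aut_map p e c' m' x) = x" if "x \<in> Gc p" for x
  proof -
    have "(c * e + m * c') mod int p = (c * e * (1 - m * m')) mod int p"
      using ee by (simp add: c'_def algebra_simps)
    also have "\<dots> = (c * e * ((1 - m * m') mod int p)) mod int p"
      by (simp add: mod_mult_right_eq)
    also have "(1 - m * m') mod int p = (1 mod int p - (m * m') mod int p) mod int p"
      by (simp add: mod_diff_eq)
    also have "\<dots> = 0"
      using m' by (simp add: cong_def)
    finally have "(c * e + m * c') mod int p = 0" by simp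
    moreover have "(m * m') mod int p = 1 mod int p"
      using m' by (simp add: cong_def)
    ultimately show ?thesis using aut_map_eq_id that by (simp add: aut_map_aut_map ee)
  qed
  ultimately show ?thesis using that by blast
qed

lemma group_Grp:
  assumes "p > 0" shows "group (Grp p)"
proof (rule groupI)
  show "x \<otimes>\<^bsub>Grp p\<^esub> y \<in> carrier (Grp p)" if "x \<in> carrier (Grp p)" "y \<in> carrier (Grp p)" for x y
    using assms by (simp add: Grp_def gmult_def mem_Gc_iff)
  show "\<one>\<^bsub>Grp p\<^esub> \<in> carrier (Grp p)" using assms by (simp add: Grp_def mem_Gc_iff)
  show "x \<otimes>\<^bsub>Grp p\<^esub> y \<otimes>\<^bsub>Grp p\<^esub> z = x \<otimes>\<^bsub>Grp p\<^esub> (y \<otimes>\<^bsub>Grp p\<^esub> z)" for x y z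
    by (simp add: Grp_def gmult_def mod_add_left_eq mod_add_right_eq add.assoc)
  show "\<one>\<^bsub>Grp p\<^esub> \<otimes>\<^bsub>Grp p\<^esub> x = x" if "x \<in> carrier (Grp p)" for x
    using that by (auto simp: Grp_def gmult_def mem_Gc_iff)
  show "\<exists>y\<in>carrier (Grp p). y \<otimes>\<^bsub>Grp p\<^esub> x = \<one>\<^bsub>Grp p\<^esub>" if "x \<in> carrier (Grp p)" for x
  proof
    show "ginv p x \<in> carrier (Grp p)" using assms by (simp add: Grp_def ginv_def mem_Gc_iff)
    show "ginv p x \<otimes>\<^bsub>Grp p\<^esub> x = \<one>\<^bsub>Grp p\<^esub>"
      by (simp add: Grp_def gmult_def ginv_def mod_add_left_eq)
  qed
qed

lemma restrict_aut_map_in_auto: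
  assumes p: "p > 0" and e: "e \<in> {1, -1}" and m: "coprime m (int p)"
  shows "restrict (aut_map p e c m) (Gc p) \<in> auto (Grp p)"
proof -
  obtain c' m' where inv: "\<And>x. x \<in> Gc p \<Longrightarrow> aut_map p e c' m' (aut_map p e c m x) = x"
    "\<And>x. x \<in> Gc p \<Longrightarrow> aut_map p e c m (aut_map p e c' m' x) = x"
    using aut_map_inverse[OF e m] by metis
  have "bij_betw (aut_map p e c m) (Gc p) (Gc p)"
    by (rule bij_betw_byWitness[where f' = "aut_map p e c' m'"]) (use inv aut_map_in_Gc[OF p] in auto)
  moreover have "bij_betw (restrict (aut_map p e c m) (Gc p)) (Gc p) (Gc p)
      = bij_betw (aut_map p e c m) (Gc p) (Gc p)"
    by (rule bij_betw_cong) simp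
  ultimately have bij: "bij_betw (restrict (aut_map p e c m) (Gc p)) (Gc p) (Gc p)" by simp
  have hom: "restrict (aut_map p e c m) (Gc p) \<in> hom (Grp p) (Grp p)"
    unfolding hom_def
  proof (intro CollectI conjI ballI)
    show "restrict (aut_map p e c m) (Gc p) \<in> carrier (Grp p) \<rightarrow> carrier (Grp p)"
      using aut_map_in_Gc[OF p] by (auto simp: Grp_def)
    fix x y assume "x \<in> carrier (Grp p)" "y \<in> carrier (Grp p)"
    moreover have "x \<otimes>\<^bsub>Grp p\<^esub> y \<in> carrier (Grp p)"
      using monoid.m_closed[OF group.is_monoid[OF group_Grp[OF p]] calculation] .
    ultimately show "restrict (aut_map p e c m) (Gc p) (x \<otimes>\<^bsub>Grp p\<^esub> y) =
        restrict (aut_map p e c m) (Gc p) x \<otimes>\<^bsub>Grp p\<^esub> restrict (aut_map p e c m) (Gc p) y"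
      by (simp add: Grp_def aut_map_gmult)
  qed
  show ?thesis unfolding auto_def Bij_def using hom bij by (simp add: Grp_def)
qed

definition class_stabilizer :: "nat \<Rightarrow> (int \<times> int) set set \<Rightarrow> (int \<times> int \<Rightarrow> int \<times> int) set" where
  "class_stabilizer p D = {restrict (aut_map p e c m) (Gc p) | e c m.
     e \<in> {1, -1} \<and> c \<in> {0..<int p} \<and> m \<in> {0..<int p} \<and> coprime m (int p) \<and> (\<forall>E\<in>D. aut_map p e c m ` E = E)}"

lemma class_stabilizerE:
  assumes "\<sigma> \<in> class_stabilizer p D"
  obtains e c m where "\<sigma> = restrict (aut_map p e c m) (Gc p)" "e \<in> {1, -1}" "c \<in> {0..<int p}"
    "m \<in> {0..<int p}" "coprime m (int p)" "\<forall>E\<in>D. aut_map p e c m ` E = E"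
  using assms unfolding class_stabilizer_def by auto

lemma finite_class_stabilizer: "finite (class_stabilizer p D)"
proof (rule finite_subset)
  show "class_stabilizer p D
      \<subseteq> (\<lambda>(e, c, m). restrict (aut_map p e c m) (Gc p)) ` ({1, -1} \<times> {0..<int p} \<times> {0..<int p})"
  proof
    fix \<sigma> assume "\<sigma> \<in> class_stabilizer p D"
    then obtain e c m where "\<sigma> = restrict (aut_map p e c m) (Gc p)"
      "e \<in> {1, -1}" "c \<in> {0..<int p}" "m \<in> {0..<int p}"
      by (elim class_stabilizerE)
    then show "\<sigma> \<in> (\<lambda>(e, c, m). restrict (aut_map p e c m) (Gc p)) ` ({1, -1} \<times> {0..<int p} \<times> {0..<int p})"
      by (intro image_eqI[where x = "(e, c, m)"]) simp_all
  qed
  show "finite ((\<lambda>(e, c, m). restrict (aut_map p e c m) (Gc p)) ` ({1, -1} \<times> {0..<int p} \<times> {0..<int p}))"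
    by (intro finite_imageI finite_cartesian_product) auto
qed

lemma restrict_aut_map_in_class_stabilizer:
  assumes "p > 0" "e \<in> {1, -1}" "coprime m (int p)" "\<forall>E\<in>D. aut_map p e c m ` E = E"
  shows "restrict (aut_map p e c m) (Gc p) \<in> class_stabilizer p D"
proof -
  have "restrict (aut_map p e c m) (Gc p) = restrict (aut_map p e (c mod int p) (m mod int p)) (Gc p)"
    by (simp only: aut_map_mod)
  moreover have "c mod int p \<in> {0..<int p}" "m mod int p \<in> {0..<int p}" "coprime (m mod int p) (int p)"
    using assms(1,3) by simp_all
  moreover have "\<forall>E\<in>D. aut_map p e (c mod int p) (m mod int p) ` E = E"
    using assms(4) by (simp only: aut_map_mod)
  ultimately show ?thesis
    unfolding class_stabilizer_def mem_Collect_eq using assms(2)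
    by (intro exI[of _ e] exI[of _ "c mod int p"] exI[of _ "m mod int p"] conjI) simp_all
qed

lemma subgroup_class_stabilizer:
  assumes p: "p > 0" and DG: "\<forall>E\<in>D. E \<subseteq> Gc p"
  shows "subgroup (class_stabilizer p D) (AutoGroup (Grp p))"
proof -
  interpret AG: group "AutoGroup (Grp p)"
    using group.AutoGroup[OF group_Grp[OF p]] .
  have carrier: "carrier (AutoGroup (Grp p)) = auto (Grp p)"
    by (simp add: AutoGroup_def)
  have mult: "\<sigma> \<otimes>\<^bsub>AutoGroup (Grp p)\<^esub> \<tau> = compose (Gc p) \<sigma> \<tau>"
    if "\<sigma> \<in> auto (Grp p)" "\<tau> \<in> auto (Grp p)" for \<sigma> \<tau>
    using that by (simp add: AutoGroup_def BijGroup_def auto_def Grp_def)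
  have sub: "class_stabilizer p D \<subseteq> auto (Grp p)"
  proof
    fix \<sigma> assume "\<sigma> \<in> class_stabilizer p D"
    then obtain e c m where "\<sigma> = restrict (aut_map p e c m) (Gc p)" "e \<in> {1, -1}" "coprime m (int p)"
      by (elim class_stabilizerE)
    then show "\<sigma> \<in> auto (Grp p)" using restrict_aut_map_in_auto[OF p] by simp
  qed
  have comp: "compose (Gc p) (restrict (aut_map p e1 c1 m1) (Gc p)) (restrict (aut_map p e2 c2 m2) (Gc p))
      = restrict (aut_map p (e1 * e2) (c1 * e2 + m1 * c2) (m1 * m2)) (Gc p)" for e1 c1 m1 e2 c2 m2
  proof
    fix x show "compose (Gc p) (restrict (aut_map p e1 c1 m1) (Gc p)) (restrict (aut_map p e2 c2 m2) (Gc p)) x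
        = restrict (aut_map p (e1 * e2) (c1 * e2 + m1 * c2) (m1 * m2)) (Gc p) x"
      using aut_map_in_Gc[OF p] by (cases "x \<in> Gc p") (simp_all add: compose_def aut_map_aut_map)
  qed
  show ?thesis
  proof (rule AG.subgroupI)
    show "class_stabilizer p D \<subseteq> carrier (AutoGroup (Grp p))"
      using sub carrier by simp
    have "aut_map p 1 0 1 ` E = E" if "E \<in> D" for E
    proof -
      have "\<forall>x\<in>E. aut_map p 1 0 1 x = x"
        using aut_map_id DG that by blast
      then show ?thesis by simp
    qed
    then show "class_stabilizer p D \<noteq> {}"
      using restrict_aut_map_in_class_stabilizer[OF p, of 1 1 D 0] by auto
  next
    fix \<sigma> assume \<sigma>: "\<sigma> \<in> class_stabilizer p D"
    then obtain e c m where ecm: "\<sigma> = restrict (aut_map p e c m) (Gc p)" "e \<in> {1, -1}"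
      "coprime m (int p)" "\<forall>E\<in>D. aut_map p e c m ` E = E"
      by (elim class_stabilizerE)
    obtain c' m' where m': "coprime m' (int p)"
      and inv: "\<And>x. x \<in> Gc p \<Longrightarrow> aut_map p e c' m' (aut_map p e c m x) = x"
      using aut_map_inverse[OF ecm(2,3)] by metis
    have "\<forall>E\<in>D. aut_map p e c' m' ` E = E"
    proof
      fix E assume E: "E \<in> D"
      have "aut_map p e c' m' ` E = aut_map p e c' m' ` aut_map p e c m ` E"
        using ecm(4) E by simp
      also have "\<dots> = E"
        using inv DG E by (force simp: image_image)
      finally show "aut_map p e c' m' ` E = E" .
    qed
    then have \<tau>: "restrict (aut_map p e c' m') (Gc p) \<in> class_stabilizer p D"
      by (rule restrict_aut_map_in_class_stabilizer[OF p ecm(2) m'])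
    have \<sigma>_auto: "\<sigma> \<in> auto (Grp p)" and \<tau>_auto: "restrict (aut_map p e c' m') (Gc p) \<in> auto (Grp p)"
      using \<sigma> \<tau> sub by blast+
    have "compose (Gc p) (restrict (aut_map p e c' m') (Gc p)) \<sigma> = (\<lambda>x\<in>Gc p. x)"
    proof
      fix x show "compose (Gc p) (restrict (aut_map p e c' m') (Gc p)) \<sigma> x = (\<lambda>x\<in>Gc p. x) x"
        using inv aut_map_in_Gc[OF p] by (cases "x \<in> Gc p") (simp_all add: compose_def ecm(1))
    qed
    then have "restrict (aut_map p e c' m') (Gc p) \<otimes>\<^bsub>AutoGroup (Grp p)\<^esub> \<sigma> = \<one>\<^bsub>AutoGroup (Grp p)\<^esub>"
      by (simp add: mult[OF \<tau>_auto \<sigma>_auto]) (simp add: AutoGroup_def BijGroup_def Grp_def)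
    then have "inv\<^bsub>AutoGroup (Grp p)\<^esub> \<sigma> = restrict (aut_map p e c' m') (Gc p)"
      using AG.inv_equality \<sigma>_auto \<tau>_auto carrier by simp
    then show "inv\<^bsub>AutoGroup (Grp p)\<^esub> \<sigma> \<in> class_stabilizer p D" using \<tau> by simp
  next
    fix \<sigma> \<tau> assume \<sigma>: "\<sigma> \<in> class_stabilizer p D" and \<tau>: "\<tau> \<in> class_stabilizer p D"
    obtain e1 c1 m1 where 1: "\<sigma> = restrict (aut_map p e1 c1 m1) (Gc p)" "e1 \<in> {1, -1}"
      "coprime m1 (int p)" "\<forall>E\<in>D. aut_map p e1 c1 m1 ` E = E"
      using \<sigma> by (elim class_stabilizerE)
    obtain e2 c2 m2 where 2: "\<tau> = restrict (aut_map p e2 c2 m2) (Gc p)" "e2 \<in> {1, -1}"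
      "coprime m2 (int p)" "\<forall>E\<in>D. aut_map p e2 c2 m2 ` E = E"
      using \<tau> by (elim class_stabilizerE)
    have "\<forall>E\<in>D. aut_map p (e1 * e2) (c1 * e2 + m1 * c2) (m1 * m2) ` E = E"
    proof
      fix E assume that: "E \<in> D"
      have "aut_map p (e1 * e2) (c1 * e2 + m1 * c2) (m1 * m2) ` E = aut_map p e1 c1 m1 ` aut_map p e2 c2 m2 ` E"
        by (simp add: image_image aut_map_aut_map)
      then show "aut_map p (e1 * e2) (c1 * e2 + m1 * c2) (m1 * m2) ` E = E" using 1(4) 2(4) that by simp
    qed
    moreover have "e1 * e2 \<in> {1, -1}" "coprime (m1 * m2) (int p)"
      using 1(2,3) 2(2,3) by auto
    ultimately have "restrict (aut_map p (e1 * e2) (c1 * e2 + m1 * c2) (m1 * m2)) (Gc p) \<in> class_stabilizer p D"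
      by (intro restrict_aut_map_in_class_stabilizer[OF p]) auto
    moreover have "\<sigma> \<otimes>\<^bsub>AutoGroup (Grp p)\<^esub> \<tau> = restrict (aut_map p (e1 * e2) (c1 * e2 + m1 * c2) (m1 * m2)) (Gc p)"
      using \<sigma> \<tau> sub by (simp add: mult subsetD 1(1) 2(1) comp)
    ultimately show "\<sigma> \<otimes>\<^bsub>AutoGroup (Grp p)\<^esub> \<tau> \<in> class_stabilizer p D" by simp
  qed
qed

context schur_ring
begin

lemma automorphic_if_aut_map_transitive:
  assumes "\<And>E g h. E \<in> D \<Longrightarrow> g \<in> E \<Longrightarrow> h \<in> E \<Longrightarrow> g \<noteq> h \<Longrightarrow> \<exists>e c m. e \<in> {1, -1} \<and>
      coprime m (int p) \<and> (\<forall>E'\<in>D. aut_map p e c m ` E' = E') \<and> aut_map p e c m g = h"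
  shows "automorphic F p D"
proof -
  let ?H = "class_stabilizer p D"
  have p: "p > 0" using p_gt_1 by simp
  have trans: "\<exists>e c m. e \<in> {1, -1} \<and> coprime m (int p) \<and>
      (\<forall>E'\<in>D. aut_map p e c m ` E' = E') \<and> aut_map p e c m g = h"
    if "E \<in> D" "g \<in> E" "h \<in> E" for E g h
  proof (cases "g = h")
    case True
    have "aut_map p 1 0 1 ` E' = E'" if "E' \<in> D" for E'
    proof -
      have "\<forall>x\<in>E'. aut_map p 1 0 1 x = x" using aut_map_id class_subset_Gc[OF that] by blast
      then show ?thesis by simp
    qed
    moreover have "aut_map p 1 0 1 g = h"
      using True that aut_map_id class_subset_Gc by blast
    ultimately show ?thesis by (intro exI[of _ 1] exI[of _ 0]) auto
  qed (use assms that in blast)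
  have invariant_iff: "class_const f \<longleftrightarrow> (\<forall>\<sigma>\<in>?H. \<forall>x\<in>Gc p. f (\<sigma> x) = f x)"
    for f :: "int \<times> int \<Rightarrow> 'a"
  proof
    assume const: "class_const f"
    show "\<forall>\<sigma>\<in>?H. \<forall>x\<in>Gc p. f (\<sigma> x) = f x"
    proof (intro ballI)
      fix \<sigma> x assume "\<sigma> \<in> ?H" and x: "x \<in> Gc p"
      then obtain e c m where \<sigma>: "\<sigma> = restrict (aut_map p e c m) (Gc p)"
        and stab: "\<forall>E\<in>D. aut_map p e c m ` E = E"
        by (elim class_stabilizerE)
      have "aut_map p e c m x \<in> aut_map p e c m ` the_class x"
        using mem_the_class[OF x] by (rule imageI)
      then have "\<sigma> x \<in> the_class x"
        using stab the_class_in_D[OF x] x \<sigma> by simp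
      then show "f (\<sigma> x) = f x"
        using class_constD[OF const the_class_in_D[OF x]] mem_the_class[OF x] by blast
    qed
  next
    assume inv: "\<forall>\<sigma>\<in>?H. \<forall>x\<in>Gc p. f (\<sigma> x) = f x"
    show "class_const f"
      unfolding class_const_def
    proof (intro ballI)
      fix E g h assume gh: "E \<in> D" "g \<in> E" "h \<in> E"
      then obtain e c m where ecm: "e \<in> {1, -1}" "coprime m (int p)"
        "\<forall>E'\<in>D. aut_map p e c m ` E' = E'" "aut_map p e c m g = h"
        using trans[OF gh] by auto
      have g: "g \<in> Gc p" using gh class_subset_Gc by blast
      have "restrict (aut_map p e c m) (Gc p) \<in> ?H"
        using restrict_aut_map_in_class_stabilizer[OF p ecm(1-3)] .
      then have "f (restrict (aut_map p e c m) (Gc p) g) = f g"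
        using inv g by blast
      then show "f g = f h" using g ecm(4) by simp
    qed
  qed
  have "cspan F D = fixed_alg F p ?H"
    unfolding cspan_eq fixed_alg_def by (simp only: invariant_iff)
  moreover have "subgroup ?H (AutoGroup (Grp p))"
    by (intro subgroup_class_stabilizer[OF p]) (simp add: class_subset_Gc)
  ultimately show ?thesis
    unfolding automorphic_def using finite_class_stabilizer by (intro exI[of _ ?H]) simp
qed

end

lemma mod_diff_cancel_iff: "(a - s) mod n = (b - s) mod n \<longleftrightarrow> a mod n = b mod (n::int)"
  by (simp add: mod_eq_dvd_iff)

lemma Gc_eqI:
  assumes "x \<in> Gc p" "fst x = a" "snd x mod int p = b mod int p"
  shows "x = (a, b mod int p)"
  using assms by (cases x) (simp add: mem_Gc_iff)

context schur_ring
begin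

lemma singleton_classI:
  assumes "g \<in> Gc p" "\<And>h. h \<in> the_class g \<Longrightarrow> h = g"
  shows "{g} \<in> D"
proof -
  have "the_class g \<subseteq> {g}" using assms(2) by blast
  then have "the_class g = {g}" using mem_the_class[OF assms(1)] by blast
  then show ?thesis using the_class_in_D[OF assms(1)] by simp
qed

end

locale sym_schur_ring = schur_ring +
  assumes phi_sym: "phi_classes D = sym_classes"
begin

lemma class_fst_image:
  assumes "E \<in> D" shows "\<exists>t. fst ` E = {t, -t}"
proof -
  have "fst ` E \<in> phi_classes D" using assms unfolding phi_classes_def by blast
  then show ?thesis using phi_sym unfolding sym_classes_def by auto
qed

lemma fst_class_cases:
  assumes "E \<in> D" "x \<in> E" "y \<in> E"
  shows "fst y = fst x \<or> fst y = - fst x"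
proof -
  obtain t where "fst ` E = {t, -t}" using class_fst_image assms(1) by blast
  moreover have "fst x \<in> fst ` E" "fst y \<in> fst ` E" using assms by auto
  ultimately show ?thesis by auto
qed

lemma fst_the_class_cases: "x \<in> Gc p \<Longrightarrow> y \<in> the_class x \<Longrightarrow> fst y = fst x \<or> fst y = - fst x"
  using the_class_in_D mem_the_class fst_class_cases by blast

lemma class_has_neg_fst:
  assumes "E \<in> D" "x \<in> E"
  obtains y where "y \<in> E" "fst y = - fst x"
proof -
  obtain t where t: "fst ` E = {t, -t}" using class_fst_image assms(1) by blast
  then have "- fst x \<in> fst ` E" using assms(2) by auto
  then show ?thesis using that by force
qed

lemma pair_classI:
  assumes g: "g \<in> Gc p" "fst g \<noteq> 0" and v: "fst v = - fst g"
    and sub: "\<And>h. h \<in> the_class g \<Longrightarrow> h = g \<or> h = v"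
  shows "{g, v} \<in> D"
proof -
  obtain y where "y \<in> the_class g" "fst y = - fst g"
    using class_has_neg_fst[OF the_class_in_D mem_the_class] g(1) by metis
  moreover have "y \<noteq> g" using \<open>fst y = - fst g\<close> g(2) by auto
  ultimately have "v \<in> the_class g" using sub by metis
  moreover have "the_class g \<subseteq> {g, v}" using sub by blast
  ultimately have "the_class g = {g, v}" using mem_the_class[OF g(1)] by blast
  then show ?thesis using the_class_in_D[OF g(1)] by simp
qed

end

locale sym_schur_ring_pair = sym_schur_ring +
  fixes i j :: int
  assumes pair_class: "{(1, i), (-1, j)} \<in> D"
    and i_range: "i \<in> {0..<int p}" and j_range: "j \<in> {0..<int p}"
begin

definition pair_flip :: "int \<times> int \<Rightarrow> int \<times> int" where
  "pair_flip = aut_map p (-1) (j - i) 1"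

lemma pair_flip_apply: "pair_flip (n, c) = (- n, (c + n * (j - i)) mod int p)"
  by (simp add: pair_flip_def aut_map_def algebra_simps)

lemma pair_flip_in_Gc: "pair_flip x \<in> Gc p"
  using p_gt_1 by (simp add: pair_flip_def aut_map_in_Gc)

lemma pair_flip_pair_flip: "x \<in> Gc p \<Longrightarrow> pair_flip (pair_flip x) = x"
  using aut_map_eq_id[of 0 p 1 x] by (simp add: pair_flip_def aut_map_aut_map)

context
  assumes sum_nonzero: "(i + j) mod int p \<noteq> 0"
begin

lemma singleton_class_sum: "{(0, (i + j) mod int p)} \<in> D"
proof (rule singleton_classI)
  let ?g = "(0::int, (i + j) mod int p)"
  show g: "?g \<in> Gc p" using p_gt_1 by (simp add: mem_Gc_iff)
  fix h assume h: "h \<in> the_class ?g"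
  obtain a b where hab: "h = (a, b)" by (cases h)
  have "a = 0" using fst_class_cases[OF the_class_in_D[OF g] mem_the_class[OF g] h] hab by simp
  have hG: "h \<in> Gc p" using h class_subset_Gc the_class_in_D[OF g] by blast
  have "gdiv p (1, i) ?g \<in> {(1, i), (-1, j)}"
    using j_range by (simp add: gdiv_def mod_diff_left_eq)
  then obtain y where y: "y \<in> {(1, i), (-1, j)}" "gdiv p y h \<in> {(1, i), (-1, j)}"
    using factorisation_transfer[OF pair_class pair_class the_class_in_D[OF g] mem_the_class[OF g] h]
    by blast
  have "b mod int p = (i + j) mod int p"
  proof (cases "y = (1, i)")
    case True
    then have "(b - i) mod int p = (j + i - i) mod int p"
      using y \<open>a = 0\<close> hab j_range by (auto simp: gdiv_def)
    then show ?thesis by (simp only: mod_diff_cancel_iff) (simp add: add.commute)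
  next
    case False
    then have "(b - j) mod int p = (i + j - j) mod int p"
      using y \<open>a = 0\<close> hab i_range by (auto simp: gdiv_def)
    then show ?thesis by (simp only: mod_diff_cancel_iff)
  qed
  then show "h = ?g" using Gc_eqI[OF hG] hab \<open>a = 0\<close> by simp
qed

lemma singleton_class_level_0:
  assumes c: "c \<in> {0..<int p}"
  shows "{(0, c)} \<in> D"
proof -
  define b where "b = (i + j) mod int p"
  have multiples: "{(0, (int n * b) mod int p)} \<in> D" for n :: nat
  proof (induction n)
    case 0
    then show ?case using zero_class by simp
  next
    case (Suc n)
    have "gmult p (0, b) (0, (int n * b) mod int p) = (0, (int (Suc n) * b) mod int p)"
      by (simp add: gmult_def mod_add_right_eq algebra_simps)
    then show ?case
      using singleton_class_gmult[OF singleton_class_sum[folded b_def] Suc] by simp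
  qed
  have "0 < b" "b < int p"
    using sum_nonzero p_gt_1 unfolding b_def by (simp_all add: order.not_eq_order_implies_strict)
  then have "\<not> int p dvd b" using zdvd_imp_le by fastforce
  then have "coprime b (int p)"
    using prime_imp_coprime[of "int p" b] prime_p by (simp add: coprime_commute)
  then obtain b' where b': "[b * b' = 1] (mod int p)"
    using cong_solve_coprime_int by blast
  define n where "n = nat ((c * b') mod int p)"
  have "int n = (c * b') mod int p" unfolding n_def using p_gt_1 by simp
  then have "(int n * b) mod int p = (c * b' * b) mod int p"
    by (simp add: mod_mult_left_eq)
  also have "\<dots> = (c * ((b * b') mod int p)) mod int p"
    by (simp add: mod_mult_right_eq mult.commute mult.left_commute)
  also have "\<dots> = c"
    using b' c p_gt_1 unfolding cong_def by simp
  finally show ?thesis using multiples[of n] by simp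
qed

lemma pair_flip_class_step:
  assumes n: "n \<ge> 0" and c: "c \<in> {0..<int p}"
    and IH: "{(n, (c - i) mod int p), pair_flip (n, (c - i) mod int p)} \<in> D"
  shows "{(n + 1, c), pair_flip (n + 1, c)} \<in> D"
proof (rule pair_classI)
  let ?g = "(n + 1, c)" and ?c' = "(c - i) mod int p"
  show g: "?g \<in> Gc p" using c by (simp add: mem_Gc_iff)
  show "fst ?g \<noteq> 0" "fst (pair_flip ?g) = - fst ?g" using n by (simp_all add: pair_flip_apply)
  fix h assume h: "h \<in> the_class ?g"
  obtain a e where hae: "h = (a, e)" by (cases h)
  have hG: "h \<in> Gc p" using h class_subset_Gc the_class_in_D[OF g] by blast
  have a: "a = n + 1 \<or> a = - (n + 1)"
    using fst_class_cases[OF the_class_in_D[OF g] mem_the_class[OF g] h] hae by simp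
  have "gdiv p (1, i) ?g \<in> {(n, ?c'), pair_flip (n, ?c')}" by (simp add: gdiv_def)
  then obtain y where y: "y \<in> {(1, i), (-1, j)}" "gdiv p y h \<in> {(n, ?c'), pair_flip (n, ?c')}"
    using factorisation_transfer[OF pair_class IH the_class_in_D[OF g] mem_the_class[OF g] h] by blast
  have "a = n + 1 \<and> (e - i) mod int p = (c - i) mod int p
      \<or> a = - (n + 1) \<and> (e - j) mod int p = (c + (n + 1) * (j - i) - j) mod int p"
  proof (cases "y = (1, i)")
    case True
    then have "a - 1 = n \<and> (e - i) mod int p = ?c' \<or> a - 1 = - n \<and> (e - i) mod int p = (?c' + n * (j - i)) mod int p"
      using y(2) hae by (auto simp: gdiv_def pair_flip_apply)
    then show ?thesis using a n by auto
  next
    case False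
    then have "y = (-1, j)" using y(1) by blast
    then have "a + 1 = n \<and> (e - j) mod int p = ?c' \<or> a + 1 = - n \<and> (e - j) mod int p = (?c' + n * (j - i)) mod int p"
      using y(2) hae by (auto simp: gdiv_def pair_flip_apply)
    moreover have "(?c' + n * (j - i)) mod int p = (c + (n + 1) * (j - i) - j) mod int p"
    proof -
      have "(?c' + n * (j - i)) mod int p = ((c - i) + n * (j - i)) mod int p"
        by (simp add: mod_add_left_eq)
      also have "(c - i) + n * (j - i) = c + (n + 1) * (j - i) - j"
        by (simp add: algebra_simps)
      finally show ?thesis .
    qed
    moreover have "?c' = (c + (n + 1) * (j - i) - j) mod int p" if "n = 0"
      using that by (simp add: algebra_simps)
    ultimately show ?thesis using a n by auto
  qed
  then have "(a = n + 1 \<and> e mod int p = c mod int p) \<or> (a = - (n + 1) \<and> e mod int p = (c + (n + 1) * (j - i)) mod int p)"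
    by (simp only: mod_diff_cancel_iff)
  then show "h = ?g \<or> h = pair_flip ?g"
    using Gc_eqI[OF hG] hae c by (auto simp: pair_flip_apply)
qed

lemma pair_flip_class:
  assumes "x \<in> Gc p"
  shows "{x, pair_flip x} \<in> D"
proof -
  have nonneg: "{(int n, c), pair_flip (int n, c)} \<in> D" if "c \<in> {0..<int p}" for n c
    using that
  proof (induction n arbitrary: c)
    case 0
    then have "pair_flip (0, c) = (0, c)" by (simp add: pair_flip_apply)
    then show ?case using singleton_class_level_0[OF "0.prems"] by simp
  next
    case (Suc n)
    have "(c - i) mod int p \<in> {0..<int p}" using p_gt_1 by simp
    then show ?case using pair_flip_class_step[OF _ Suc.prems Suc.IH] by (simp add: add.commute)
  qed
  show ?thesis
  proof (cases "fst x \<ge> 0")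
    case True
    then show ?thesis
      using nonneg[of "snd x" "nat (fst x)"] assms by (simp add: mem_Gc_iff)
  next
    case False
    let ?y = "pair_flip x"
    have "{?y, pair_flip ?y} \<in> D"
      using nonneg[of "snd ?y" "nat (fst ?y)"] pair_flip_in_Gc[of x] False
      by (cases x) (simp add: mem_Gc_iff pair_flip_apply)
    then show ?thesis using pair_flip_pair_flip[OF assms] by (simp add: insert_commute)
  qed
qed

lemma the_class_eq_pair_flip: "x \<in> Gc p \<Longrightarrow> the_class x = {x, pair_flip x}"
  using the_class_eq[OF pair_flip_class] by simp

lemma class_eq_pair_flip: "E \<in> D \<Longrightarrow> x \<in> E \<Longrightarrow> E = {x, pair_flip x}"
  using the_class_eq the_class_eq_pair_flip class_subset_Gc by blast

lemma automorphic_if_sum_nonzero: "automorphic F p D"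
proof (rule automorphic_if_aut_map_transitive)
  have "pair_flip ` E = E" if E: "E \<in> D" for E
  proof -
    obtain x where x: "x \<in> E" using class_nonempty[OF E] by blast
    then have "x \<in> Gc p" using E class_subset_Gc by blast
    moreover have "E = {x, pair_flip x}" using class_eq_pair_flip[OF E x] .
    ultimately show ?thesis using pair_flip_pair_flip by auto
  qed
  moreover have "pair_flip g = h" if "E \<in> D" "g \<in> E" "h \<in> E" "g \<noteq> h" for E g h
  proof -
    have "h \<in> {g, pair_flip g}" using class_eq_pair_flip[OF that(1,2)] that(3) by simp
    then show ?thesis using that(4) by simp
  qed
  ultimately show "\<exists>e c m. e \<in> {1, -1} \<and> coprime m (int p) \<and>
      (\<forall>E'\<in>D. aut_map p e c m ` E' = E') \<and> aut_map p e c m g = h"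
    if "E \<in> D" "g \<in> E" "h \<in> E" "g \<noteq> h" for E g h
    using that unfolding pair_flip_def by (intro exI[of _ "-1"] exI[of _ "j - i"] exI[of _ 1]) auto
qed

end

end

locale sym_schur_ring_inverse_pair = sym_schur_ring_pair +
  assumes sum_zero: "(i + j) mod int p = 0"
begin


definition pt :: "int \<Rightarrow> int \<Rightarrow> int \<times> int" where
  "pt n u = (n, (n * i + u) mod int p)"

definition offset :: "int \<times> int \<Rightarrow> int" where
  "offset y = snd y - fst y * i"

lemma fst_pt[simp]: "fst (pt n u) = n" by (simp add: pt_def)

lemma pt_in_Gc[simp]: "pt n u \<in> Gc p" using int_p_gt_1 by (simp add: pt_def mem_Gc_iff)

lemma pt_offset: "y \<in> Gc p \<Longrightarrow> pt (fst y) (offset y) = y"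
  by (cases y) (simp add: pt_def offset_def mem_Gc_iff)

lemma pt_eq_iff: "pt n u = pt n' u' \<longleftrightarrow> n = n' \<and> u mod int p = u' mod int p"
proof
  assume h: "pt n u = pt n' u'"
  then have n: "n = n'" by (simp add: pt_def)
  then have "(n * i + u) mod int p = (n * i + u') mod int p" using h by (simp add: pt_def)
  then have "u mod int p = u' mod int p" by (simp add: mod_eq_dvd_iff)
  then show "n = n' \<and> u mod int p = u' mod int p" using n by simp
next
  assume h: "n = n' \<and> u mod int p = u' mod int p"
  have "(n * i + u) mod int p = (n * i + u mod int p) mod int p" by (simp add: mod_add_right_eq)
  also have "\<dots> = (n * i + u' mod int p) mod int p" using h by simp
  also have "\<dots> = (n * i + u') mod int p" by (simp add: mod_add_right_eq)
  finally have "(n * i + u) mod int p = (n * i + u') mod int p" .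
  then show "pt n u = pt n' u'" using h by (simp add: pt_def)
qed

lemma pt_offset_pt: "pt n (offset (pt n u)) = pt n u"
  by (simp add: pt_eq_iff offset_def pt_def mod_eq_dvd_iff)

lemma offset_pt_mod: "offset (pt n u) mod int p = u mod int p"
  using pt_offset_pt[of n u] by (simp add: pt_eq_iff)

lemma gdiv_pt: "gdiv p (pt n u) (pt n' u') = pt (n' - n) (u' - u)"
proof -
  have "((n' * i + u') mod int p - (n * i + u) mod int p) mod int p = ((n' * i + u') - (n * i + u)) mod int p"
    by (simp add: mod_diff_eq)
  also have "(n' * i + u') - (n * i + u) = (n' - n) * i + (u' - u)" by (simp add: algebra_simps)
  finally show ?thesis by (simp add: gdiv_def pt_def)
qed

lemma j_eq: "j = (- i) mod int p"
proof -
  have e: "j - (- i) = i + j" by simp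
  have "(j - (- i)) mod int p = 0" unfolding e by (rule sum_zero)
  then have "int p dvd (j - (- i))" by (simp only: dvd_eq_mod_eq_0)
  then have "j mod int p = (- i) mod int p" by (simp only: mod_eq_dvd_iff)
  then show ?thesis using i_range j_range by simp
qed

lemma pair_class_pt: "{pt 1 0, pt (-1) 0} \<in> D"
proof -
  have "pt 1 0 = (1, i)" using i_range j_range by (simp add: pt_def)
  moreover have "pt (-1) 0 = (-1, j)" using j_eq by (simp add: pt_def)
  ultimately show ?thesis using pair_class by simp
qed

definition shift_up :: "int \<times> int \<Rightarrow> int \<times> int" where
  "shift_up y = pt (fst y + sgn (fst y)) (offset y)"

definition shift_down :: "int \<times> int \<Rightarrow> int \<times> int" where
  "shift_down y = pt (fst y - sgn (fst y)) (offset y)"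

lemma shift_up_pt: "shift_up (pt n u) = pt (n + sgn n) u"
  using offset_pt_mod[of n u] by (simp add: shift_up_def pt_eq_iff)

lemma shift_down_pt: "shift_down (pt n u) = pt (n - sgn n) u"
  using offset_pt_mod[of n u] by (simp add: shift_down_def pt_eq_iff)

lemma shift_down_shift_up: "y \<in> Gc p \<Longrightarrow> fst y \<noteq> 0 \<Longrightarrow> shift_down (shift_up y) = y"
proof -
  assume y: "y \<in> Gc p" "fst y \<noteq> 0"
  obtain n u where "y = pt n u" using pt_offset[OF y(1)] by metis
  moreover have "sgn (n + sgn n) = sgn n" if "n \<noteq> 0" for n :: int
    using that by (cases "n > 0") (auto simp: sgn_if)
  ultimately show ?thesis using y(2) by (simp add: shift_up_pt shift_down_pt)
qed

lemma shift_up_shift_down: "y \<in> Gc p \<Longrightarrow> \<bar>fst y\<bar> \<ge> 2 \<Longrightarrow> shift_up (shift_down y) = y"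
proof -
  assume y: "y \<in> Gc p" "\<bar>fst y\<bar> \<ge> 2"
  obtain n u where yn: "y = pt n u" using pt_offset[OF y(1)] by metis
  have "sgn (n - sgn n) = sgn n" if "\<bar>n\<bar> \<ge> 2" for n :: int
    using that by (cases "n > 0") (auto simp: sgn_if)
  then show ?thesis using y(2) yn by (simp add: shift_up_pt shift_down_pt)
qed



lemma shift_down_mem_the_class:
  assumes g: "g \<in> Gc p" "\<bar>fst g\<bar> = n" "n \<ge> 1" and h: "h \<in> the_class (shift_up g)"
  shows "shift_down h \<in> the_class g"
proof -
  obtain a u where gau: "g = pt a u" using pt_offset[OF g(1)] by metis
  have hG: "h \<in> Gc p" using h the_class_subset_Gc pt_in_Gc unfolding shift_up_def by blast
  obtain b v where hbv: "h = pt b v" using pt_offset[OF hG] by metis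
  have upg: "shift_up g = pt (a + sgn a) u" using gau shift_up_pt by simp
  have bl: "b = a + sgn a \<or> b = - (a + sgn a)" using fst_the_class_cases[OF pt_in_Gc h[unfolded upg]] hbv upg by simp
  have y0: "pt (sgn a) 0 \<in> {pt 1 0, pt (-1) 0}" using g gau by (auto simp: sgn_if)
  have "gdiv p (pt (sgn a) 0) (pt (a + sgn a) u) = pt a u" by (simp add: gdiv_pt)
  then have "gdiv p (pt (sgn a) 0) (shift_up g) = g" using upg gau by simp
  then have dvin: "gdiv p (pt (sgn a) 0) (shift_up g) \<in> the_class g" using the_class_in_D[OF g(1)] mem_the_class[OF g(1)] by simp
  have upG: "shift_up g \<in> Gc p" unfolding upg by simp
  have c1: "the_class g \<in> D" using the_class_in_D[OF g(1)] mem_the_class[OF g(1)] by blast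
  have c2: "the_class (shift_up g) \<in> D" "shift_up g \<in> the_class (shift_up g)" using the_class_in_D[OF upG] mem_the_class[OF upG] by auto
  obtain y where y: "y \<in> {pt 1 0, pt (-1) 0}" "gdiv p y h \<in> the_class g"
    using factorisation_transfer[OF pair_class_pt c1 c2(1) c2(2) h y0 dvin] by blast
  obtain c where yc: "y = pt c 0" "c = 1 \<or> c = -1" using y by blast
  have "gdiv p y h = pt (b - c) v" unfolding yc hbv gdiv_pt by simp
  then have "b - c = a \<or> b - c = - a" using fst_the_class_cases[OF g(1) y(2)] gau by simp
  then have "c = sgn b" using bl yc(2) g gau by (auto simp: sgn_if split: if_splits)
  then have "gdiv p y h = shift_down h" unfolding yc hbv gdiv_pt shift_down_pt by simp
  then show ?thesis using y(2) by simp
qed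


lemma shift_up_mem_the_class:
  assumes g: "g \<in> Gc p" "\<bar>fst g\<bar> \<ge> 2" and h: "h \<in> the_class (shift_down g)"
  shows "shift_up h \<in> the_class g"
proof -
  obtain a u where gau: "g = pt a u" using pt_offset[OF g(1)] by metis
  have dg: "shift_down g = pt (a - sgn a) u" using gau shift_down_pt by simp
  have dG: "shift_down g \<in> Gc p" unfolding dg by simp
  have hG: "h \<in> Gc p" using h the_class_subset_Gc[OF dG] by blast
  obtain b v where hbv: "h = pt b v" using pt_offset[OF hG] by metis
  have bl: "b = a - sgn a \<or> b = - (a - sgn a)" using fst_the_class_cases[OF dG h] hbv dg by simp
  have y0: "pt (- sgn a) 0 \<in> {pt 1 0, pt (-1) 0}" using g gau by (auto simp: sgn_if)
  have "gdiv p (pt (- sgn a) 0) (pt (a - sgn a) u) = pt a u" by (simp add: gdiv_pt)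
  then have dvin: "gdiv p (pt (- sgn a) 0) (shift_down g) \<in> the_class g" using dg gau the_class_in_D[OF g(1)] mem_the_class[OF g(1)] by simp
  have c1: "the_class g \<in> D" using the_class_in_D[OF g(1)] mem_the_class[OF g(1)] by blast
  have c2: "the_class (shift_down g) \<in> D" "shift_down g \<in> the_class (shift_down g)" using the_class_in_D[OF dG] mem_the_class[OF dG] by auto
  obtain y where y: "y \<in> {pt 1 0, pt (-1) 0}" "gdiv p y h \<in> the_class g"
    using factorisation_transfer[OF pair_class_pt c1 c2(1) c2(2) h y0 dvin] by blast
  obtain c where yc: "y = pt c 0" "c = 1 \<or> c = -1" using y by blast
  have "gdiv p y h = pt (b - c) v" unfolding yc hbv gdiv_pt by simp
  then have "b - c = a \<or> b - c = - a" using fst_the_class_cases[OF g(1) y(2)] gau by simp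
  then have "c = - sgn b" using bl yc(2) g gau by (auto simp: sgn_if split: if_splits)
  then have "gdiv p y h = shift_up h" unfolding yc hbv gdiv_pt shift_up_pt by simp
  then show ?thesis using y(2) by simp
qed

lemma the_class_shift_up:
  assumes g: "g \<in> Gc p" "fst g \<noteq> 0"
  shows "the_class (shift_up g) = shift_up ` the_class g"
proof
  obtain a u where gau: "g = pt a u" using pt_offset[OF g(1)] by metis
  have upg: "shift_up g = pt (a + sgn a) u" using gau shift_up_pt by simp
  have upG: "shift_up g \<in> Gc p" unfolding upg by simp
  have fa: "\<bar>a + sgn a\<bar> = \<bar>a\<bar> + 1" using g gau by (auto simp: sgn_if)
  show "the_class (shift_up g) \<subseteq> shift_up ` the_class g"
  proof
    fix h assume h: "h \<in> the_class (shift_up g)"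
    have "shift_down h \<in> the_class g" using shift_down_mem_the_class[OF g(1) refl _ h] g by simp
    moreover have "shift_up (shift_down h) = h"
    proof (rule shift_up_shift_down)
      show "h \<in> Gc p" using h the_class_subset_Gc[OF upG] by blast
      have "fst h = a + sgn a \<or> fst h = - (a + sgn a)" using fst_the_class_cases[OF upG h] upg by simp
      then show "\<bar>fst h\<bar> \<ge> 2" using fa g gau by auto
    qed
    ultimately show "h \<in> shift_up ` the_class g" by (metis image_eqI)
  qed
  show "shift_up ` the_class g \<subseteq> the_class (shift_up g)"
  proof
    fix h assume "h \<in> shift_up ` the_class g"
    then obtain h' where h': "h' \<in> the_class g" "h = shift_up h'" by blast
    have "shift_down (shift_up g) = g" using shift_down_shift_up g by simp
    then have "h' \<in> the_class (shift_down (shift_up g))" using h' by simp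
    moreover have "\<bar>fst (shift_up g)\<bar> \<ge> 2" using fa g gau upg by auto
    ultimately show "h \<in> the_class (shift_up g)" using shift_up_mem_the_class[OF upG] h' by simp
  qed
qed

lemma pt_mem_the_class_iff:
  assumes s: "s = 1 \<or> s = -1" and s': "s' = 1 \<or> s' = -1"
  shows "pt (s' * int (Suc m)) u' \<in> the_class (pt (s * int (Suc m)) u) \<longleftrightarrow> pt s' u' \<in> the_class (pt s u)"
proof (induction m)
  case 0 then show ?case by simp
next
  case (Suc m)
  define n where "n = int (Suc m)"
  have n1: "n \<ge> 1" unfolding n_def by simp
  have sg: "sgn (s * n) = s" "sgn (s' * n) = s'" using s s' n1 by (auto simp: sgn_if)
  have e1: "shift_up (pt (s * n) u) = pt (s * int (Suc (Suc m))) u"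
    using shift_up_pt sg unfolding n_def by (simp add: algebra_simps)
  have e2: "shift_up (pt (s' * n) u') = pt (s' * int (Suc (Suc m))) u'"
    using shift_up_pt sg unfolding n_def by (simp add: algebra_simps)
  have nz: "fst (pt (s * n) u) \<noteq> 0" using s n1 by auto
  have "pt (s' * int (Suc (Suc m))) u' \<in> the_class (pt (s * int (Suc (Suc m))) u)
      \<longleftrightarrow> shift_up (pt (s' * n) u') \<in> shift_up ` the_class (pt (s * n) u)"
    using the_class_shift_up[OF pt_in_Gc nz] e1 e2 by simp
  also have "\<dots> \<longleftrightarrow> pt (s' * n) u' \<in> the_class (pt (s * n) u)"
  proof
    assume "shift_up (pt (s' * n) u') \<in> shift_up ` the_class (pt (s * n) u)"
    then obtain y where y: "y \<in> the_class (pt (s * n) u)" "shift_up (pt (s' * n) u') = shift_up y" by blast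
    have yG: "y \<in> Gc p" using y the_class_subset_Gc[OF pt_in_Gc] by blast
    have "fst y \<noteq> 0" using fst_the_class_cases[OF pt_in_Gc y(1)] nz by auto
    then have "y = shift_down (shift_up y)" using shift_down_shift_up yG by simp
    also have "\<dots> = shift_down (shift_up (pt (s' * n) u'))" using y by simp
    also have "\<dots> = pt (s' * n) u'" by (rule shift_down_shift_up) (use s' n1 in auto)
    finally show "pt (s' * n) u' \<in> the_class (pt (s * n) u)" using y by simp
  qed auto
  finally show ?case using Suc unfolding n_def by simp
qed


end

context sym_schur_ring_inverse_pair
begin

definition dil :: "int \<Rightarrow> int \<Rightarrow> int \<times> int \<Rightarrow> int \<times> int" where
  "dil e m = aut_map p e ((e - m) * i) m"

lemma pt_eq_aut_map: "pt n u = aut_map p 1 i 1 (n, u)"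
  by (simp add: pt_def aut_map_def algebra_simps)

lemma dil_pt: "dil e m (pt n u) = pt (e * n) (m * u)"
  by (simp add: pt_eq_aut_map dil_def aut_map_aut_map) (simp add: aut_map_def algebra_simps)

lemma dil_dil: "y \<in> Gc p \<Longrightarrow> dil e1 m1 (dil e2 m2 y) = dil (e1 * e2) (m1 * m2) y"
proof -
  assume "y \<in> Gc p"
  then obtain n u where "y = pt n u" using pt_offset by metis
  then show ?thesis by (simp add: dil_pt algebra_simps)
qed

lemma gpow_pt: "gpow p q (pt n u) = pt (int q * n) (int q * u)"
proof -
  have "(int q * ((n * i + u) mod int p)) mod int p = (int q * (n * i + u)) mod int p" by (simp add: mod_mult_right_eq)
  also have "int q * (n * i + u) = (int q * n) * i + int q * u" by (simp add: algebra_simps)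
  finally show ?thesis by (simp add: gpow_def pt_def)
qed

lemma dil_in_Gc: "dil e m y \<in> Gc p" unfolding dil_def using aut_map_in_Gc p_gt_0 by blast

lemma inj_on_dil: assumes "e = 1 \<or> e = -1" "\<not> int p dvd m" shows "inj_on (dil e m) (Gc p)"
proof
  fix x y assume xy: "x \<in> Gc p" "y \<in> Gc p" "dil e m x = dil e m y"
  obtain n u where x: "x = pt n u" using pt_offset[OF xy(1)] by metis
  obtain n' u' where y: "y = pt n' u'" using pt_offset[OF xy(2)] by metis
  have "e * n = e * n'" "(m * u) mod int p = (m * u') mod int p" using xy(3) unfolding x y dil_pt pt_eq_iff by auto
  then have nn: "n = n'" using assms(1) by auto
  have "int p dvd m * (u - u')" using \<open>(m * u) mod int p = (m * u') mod int p\<close>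
    by (simp add: mod_eq_dvd_iff algebra_simps)
  moreover have "prime (int p)" using prime_p by simp
  ultimately have "int p dvd (u - u')" using assms(2) prime_dvd_mult_iff by blast
  then have "u mod int p = u' mod int p" by (simp add: mod_eq_dvd_iff)
  then show "x = y" unfolding x y pt_eq_iff using nn by simp
qed

definition class_closed :: "(int \<times> int) set \<Rightarrow> bool" where
  "class_closed X \<longleftrightarrow> X \<subseteq> Gc p \<and> (\<forall>g\<in>X. the_class g \<subseteq> X)"

definition levels_01 :: "(int \<times> int) set \<Rightarrow> bool" where
  "levels_01 X \<longleftrightarrow> (\<forall>y\<in>X. fst y = 0) \<or> (\<forall>y\<in>X. \<bar>fst y\<bar> = 1)"

lemma class_closed_class: "X \<in> D \<Longrightarrow> class_closed X"
  unfolding class_closed_def using class_subset_Gc the_class_eq by blast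

lemma levels_01_dil: "levels_01 X \<Longrightarrow> e = 1 \<or> e = -1 \<Longrightarrow> X \<subseteq> Gc p \<Longrightarrow> levels_01 (dil e m ` X)"
proof -
  assume a: "levels_01 X" "e = 1 \<or> e = -1" "X \<subseteq> Gc p"
  have f: "fst (dil e m y) = e * fst y" if "y \<in> Gc p" for y
    using pt_offset[OF that] dil_pt by (metis fst_pt)
  show ?thesis using a(1) unfolding levels_01_def
  proof (elim disjE)
    assume h: "\<forall>y\<in>X. fst y = 0"
    have "\<forall>z\<in>dil e m ` X. fst z = 0"
    proof
      fix z assume "z \<in> dil e m ` X"
      then obtain y where y: "y \<in> X" "z = dil e m y" by blast
      then have "fst z = e * fst y" using f a(3) by blast
      then show "fst z = 0" using h y by simp
    qed
    then show "(\<forall>z\<in>dil e m ` X. fst z = 0) \<or> (\<forall>z\<in>dil e m ` X. \<bar>fst z\<bar> = 1)" by blast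
  next
    assume h: "\<forall>y\<in>X. \<bar>fst y\<bar> = 1"
    have "\<forall>z\<in>dil e m ` X. \<bar>fst z\<bar> = 1"
    proof
      fix z assume "z \<in> dil e m ` X"
      then obtain y where y: "y \<in> X" "z = dil e m y" by blast
      then have "fst z = e * fst y" using f a(3) by blast
      then show "\<bar>fst z\<bar> = 1" using h y a(2) by (auto simp: abs_mult)
    qed
    then show "(\<forall>z\<in>dil e m ` X. fst z = 0) \<or> (\<forall>z\<in>dil e m ` X. \<bar>fst z\<bar> = 1)" by blast
  qed
qed

lemma dil_prime_class_closed:
  assumes X: "X \<in> D" "levels_01 X" and q: "prime q" "q \<noteq> p"
  shows "class_closed (dil 1 (int q) ` X)"
  unfolding class_closed_def
proof (intro conjI ballI subsetI)
  fix g assume "g \<in> dil 1 (int q) ` X" then show "g \<in> Gc p" using dil_in_Gc by blast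
next
  fix g h assume g: "g \<in> dil 1 (int q) ` X" and h: "h \<in> the_class g"
  obtain y where y: "y \<in> X" "g = dil 1 (int q) y" using g by blast
  have yG: "y \<in> Gc p" using y X class_subset_Gc by blast
  obtain n u where ynu: "y = pt n u" using pt_offset[OF yG] by metis
  have gG: "g \<in> Gc p" using y dil_in_Gc by simp
  have hG: "h \<in> Gc p" using h the_class_subset_Gc[OF gG] by blast
  obtain n' v where hv: "h = pt n' v" using pt_offset[OF hG] by metis
  have q1: "int q \<ge> 2" using q prime_ge_2_nat by simp
  obtain mq where "q = Suc mq" using q(1) prime_gt_0_nat gr0_implies_Suc by blast
  then have mq: "int q = int (Suc mq)" by simp
  show "h \<in> dil 1 (int q) ` X"
  proof (cases "n = 0")
    case True
    then have "g = pt 0 (int q * u)" using y ynu dil_pt by simp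
    moreover have "gpow p q y = pt 0 (int q * u)" using ynu True gpow_pt by simp
    ultimately have gpw: "g \<in> gpow p q ` X" using y by (metis image_eqI)
    have "h \<in> gpow p q ` X" using gpow_image_closed[OF X(1) q the_class_in_D[OF gG] mem_the_class[OF gG] h gpw] .
    then obtain z where z: "z \<in> X" "h = gpow p q z" by blast
    have zG: "z \<in> Gc p" using z X class_subset_Gc by blast
    obtain n2 u2 where znu: "z = pt n2 u2" using pt_offset[OF zG] by metis
    have "n2 = 0" using X(2) z y ynu True znu unfolding levels_01_def by auto
    then have "h = dil 1 (int q) z" using z znu gpow_pt dil_pt by simp
    then show ?thesis using z by blast
  next
    case False
    then have n1: "n = 1 \<or> n = -1" using X(2) y ynu unfolding levels_01_def by auto
    have gb: "g = pt n (int q * u)" using y ynu dil_pt by simp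
    have nl: "n' = n \<or> n' = - n" using fst_the_class_cases[OF gG h] gb hv by simp
    then have n'1: "n' = 1 \<or> n' = -1" using n1 by auto
    have "pt n' v \<in> the_class (pt n (int q * u))" using h hv gb by simp
    then have "pt (n' * int (Suc mq)) v \<in> the_class (pt (n * int (Suc mq)) (int q * u))"
      using pt_mem_the_class_iff[OF n1 n'1] by blast
    then have hin: "pt (int q * n') v \<in> the_class (gpow p q y)" using mq ynu gpow_pt by (simp add: mult.commute)
    have pG: "gpow p q y \<in> Gc p" unfolding ynu gpow_pt by simp
    have gpw: "gpow p q y \<in> gpow p q ` X" using y by blast
    have "pt (int q * n') v \<in> gpow p q ` X"
      using gpow_image_closed[OF X(1) q the_class_in_D[OF pG] mem_the_class[OF pG] hin gpw] .
    then obtain z where z: "z \<in> X" "pt (int q * n') v = gpow p q z" by blast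
    have zG: "z \<in> Gc p" using z X class_subset_Gc by blast
    obtain n2 u2 where znu: "z = pt n2 u2" using pt_offset[OF zG] by metis
    have "pt (int q * n') v = pt (int q * n2) (int q * u2)" using z znu gpow_pt by simp
    then have "n2 = n'" "v mod int p = (int q * u2) mod int p" using q1 unfolding pt_eq_iff by auto
    then have "h = dil 1 (int q) z" using hv znu dil_pt pt_eq_iff by simp
    then show ?thesis using z by blast
  qed
qed


lemma levels_01_subset: "levels_01 X \<Longrightarrow> Y \<subseteq> X \<Longrightarrow> levels_01 Y"
  unfolding levels_01_def by blast

lemma dil_prime_closed:
  assumes Y: "class_closed Y" "levels_01 Y" and q: "prime q" "q \<noteq> p"
  shows "class_closed (dil 1 (int q) ` Y)"
  unfolding class_closed_def
proof (intro conjI ballI subsetI)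
  fix g assume "g \<in> dil 1 (int q) ` Y" then show "g \<in> Gc p" using dil_in_Gc by blast
next
  fix g h assume g: "g \<in> dil 1 (int q) ` Y" and h: "h \<in> the_class g"
  obtain y where y: "y \<in> Y" "g = dil 1 (int q) y" using g by blast
  have yG: "y \<in> Gc p" using y Y(1) unfolding class_closed_def by blast
  have cy: "the_class y \<in> D" "y \<in> the_class y" using the_class_in_D[OF yG] mem_the_class[OF yG] by auto
  have sub: "the_class y \<subseteq> Y" using Y(1) y unfolding class_closed_def by blast
  have "class_closed (dil 1 (int q) ` the_class y)" using dil_prime_class_closed[OF cy(1) levels_01_subset[OF Y(2) sub] q] .
  moreover have "g \<in> dil 1 (int q) ` the_class y" using y cy by blast
  ultimately have "h \<in> dil 1 (int q) ` the_class y" using h unfolding class_closed_def by blast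
  then show "h \<in> dil 1 (int q) ` Y" using sub by blast
qed

lemma dil_1_1: "y \<in> Gc p \<Longrightarrow> dil 1 1 y = y"
  using pt_offset dil_pt by (metis mult_1)

lemma dil_class_closed:
  assumes X: "X \<in> D" "levels_01 X"
  shows "m \<ge> 1 \<Longrightarrow> \<not> p dvd m \<Longrightarrow> class_closed (dil 1 (int m) ` X)"
proof (induction m rule: less_induct)
  case (less m)
  show ?case
  proof (cases "m = 1")
    case True
    have "dil 1 (int m) ` X = X"
    proof -
      have "\<forall>y\<in>X. dil 1 (int m) y = y" using dil_1_1 True class_subset_Gc X by auto
      then show ?thesis by simp
    qed
    then show ?thesis using class_closed_class[OF X(1)] by simp
  next
    case False
    obtain q where q: "prime q" "q dvd m" using prime_factor_nat False by blast
    obtain m' where m': "m = q * m'" using q(2) by (elim dvdE)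
    have q1: "q > 1" using q prime_gt_1_nat by blast
    have m'1: "m' \<ge> 1" using less.prems m' by (cases m') auto
    have m'l: "m' < m" using m' q1 m'1 by simp
    have m'p: "\<not> p dvd m'" using less.prems m' by (metis dvd_mult)
    have qp: "q \<noteq> p" using less.prems q by blast
    have IH: "class_closed (dil 1 (int m') ` X)" using less.IH[OF m'l m'1 m'p] .
    have lv: "levels_01 (dil 1 (int m') ` X)" using levels_01_dil[OF X(2)] class_subset_Gc[OF X(1)] by blast
    have "class_closed (dil 1 (int q) ` dil 1 (int m') ` X)" using dil_prime_closed[OF IH lv q(1) qp] .
    moreover have "dil 1 (int q) ` dil 1 (int m') ` X = dil 1 (int m) ` X"
    proof -
      have "\<forall>y\<in>X. dil 1 (int q) (dil 1 (int m') y) = dil 1 (int m) y"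
        using dil_dil class_subset_Gc[OF X(1)] m' by auto
      then show ?thesis by (simp add: image_image)
    qed
    ultimately show ?thesis by simp
  qed
qed

lemma dil_inverse:
  assumes "(a * b) mod int p = 1" "y \<in> Gc p"
  shows "dil 1 a (dil 1 b y) = y"
proof -
  obtain n u where y: "y = pt n u" using pt_offset[OF assms(2)] by metis
  have "(a * b * u) mod int p = ((a * b) mod int p * u) mod int p" by (simp add: mod_mult_left_eq)
  also have "\<dots> = u mod int p" using assms(1) by simp
  finally have h: "(a * b * u) mod int p = u mod int p" .
  show ?thesis unfolding y dil_dil[OF pt_in_Gc] dil_pt pt_eq_iff using h by (simp add: mult.assoc)
qed

lemma inverse_mod_nat:
  assumes "m \<ge> 1" "\<not> p dvd m"
  obtains m' where "m' \<ge> 1" "\<not> p dvd m'" "(int m * int m') mod int p = 1" "(int m' * int m) mod int p = 1"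
proof -
  have "coprime p m" using prime_imp_coprime_nat[OF prime_p assms(2)] .
  then have "coprime m p" by (simp add: coprime_commute)
  then obtain x where x: "[m * x = Suc 0] (mod p)" using cong_solve_coprime_nat by blast
  then have x1: "(m * x) mod p = 1" using p_gt_1 unfolding cong_def by simp
  have "x \<noteq> 0"
  proof
    assume "x = 0" then show False using x1 by simp
  qed
  moreover have "\<not> p dvd x" using x1 p_gt_1 by (metis dvd_mult mod_0_imp_dvd dvd_imp_mod_0 one_neq_zero dvd_mod_iff)
  moreover have mx: "(int m * int x) mod int p = 1" using x1 by (metis of_nat_mult of_nat_mod of_nat_1)
  moreover have "(int x * int m) mod int p = 1" using mx by (simp add: mult.commute)
  ultimately show ?thesis by (intro that[of x]) auto
qed

lemma dil_class_in_D:
  assumes X: "X \<in> D" "levels_01 X" and m: "m \<ge> 1" "\<not> p dvd m"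
  shows "dil 1 (int m) ` X \<in> D"
proof -
  obtain m' where m': "m' \<ge> 1" "\<not> p dvd m'" "(int m * int m') mod int p = 1" "(int m' * int m) mod int p = 1"
    using inverse_mod_nat[OF m] by blast
  obtain x0 where x0: "x0 \<in> X" using class_nonempty[OF X(1)] by blast
  have XG: "X \<subseteq> Gc p" using class_subset_Gc[OF X(1)] .
  define g where "g = dil 1 (int m) x0"
  have gG: "g \<in> Gc p" unfolding g_def using dil_in_Gc by simp
  define Z where "Z = the_class g"
  have Z: "Z \<in> D" "g \<in> Z" unfolding Z_def using the_class_in_D[OF gG] mem_the_class[OF gG] by auto
  have cU: "class_closed (dil 1 (int m) ` X)" using dil_class_closed[OF X m] .
  have ZS: "Z \<subseteq> dil 1 (int m) ` X" using cU x0 unfolding Z_def g_def class_closed_def by blast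
  have lvZ: "levels_01 Z" using levels_01_subset[OF levels_01_dil[OF X(2) _ XG] ZS] by simp
  have cW: "class_closed (dil 1 (int m') ` Z)" using dil_class_closed[OF Z(1) lvZ m'(1,2)] .
  have WX: "dil 1 (int m') ` Z \<subseteq> X"
  proof
    fix w assume "w \<in> dil 1 (int m') ` Z"
    then obtain z where z: "z \<in> Z" "w = dil 1 (int m') z" by blast
    then obtain y where y: "y \<in> X" "z = dil 1 (int m) y" using ZS by blast
    have "dil 1 (int m') (dil 1 (int m) y) = y" using dil_inverse[OF m'(4)] XG y(1) by blast
    then have "w = y" using z(2) y(2) by simp
    then show "w \<in> X" using y by simp
  qed
  have "x0 \<in> dil 1 (int m') ` Z"
  proof -
    have "dil 1 (int m') g = x0" unfolding g_def using dil_inverse[OF m'(4)] XG x0 by blast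
    then show ?thesis using Z by (metis image_eqI)
  qed
  then have "the_class x0 \<subseteq> dil 1 (int m') ` Z" using cW unfolding class_closed_def by blast
  moreover have "the_class x0 = X" using the_class_eq[OF X(1) x0] .
  ultimately have WXe: "dil 1 (int m') ` Z = X" using WX by blast
  have "dil 1 (int m) ` X = dil 1 (int m) ` dil 1 (int m') ` Z" using WXe by simp
  also have "\<dots> = Z"
  proof -
    have "\<forall>z\<in>Z. dil 1 (int m) (dil 1 (int m') z) = z" using dil_inverse[OF m'(3)] class_subset_Gc[OF Z(1)] by blast
    then show ?thesis by (simp add: image_image)
  qed
  finally show ?thesis using Z by simp
qed

lemma level0_projection_same_class:
  assumes X: "X \<in> D" "\<forall>y\<in>X. \<bar>fst y\<bar> = 1" and y: "y \<in> X" "y' \<in> X"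
  shows "pt 0 (offset y') \<in> the_class (pt 0 (offset y))"
proof -
  have yG: "y \<in> Gc p" "y' \<in> Gc p" using y X class_subset_Gc by auto
  have B: "the_class (pt 0 (offset y)) \<in> D" "pt 0 (offset y) \<in> the_class (pt 0 (offset y))" using the_class_in_D[OF pt_in_Gc] mem_the_class[OF pt_in_Gc] by auto
  have y0: "pt (fst y) 0 \<in> {pt 1 0, pt (-1) 0}" using X(2) y by (auto simp: abs_if split: if_splits)
  have "gdiv p (pt (fst y) 0) y = pt 0 (offset y)"
    using pt_offset[OF yG(1)] gdiv_pt by (metis add.right_neutral diff_self diff_zero)
  then have "gdiv p (pt (fst y) 0) y \<in> the_class (pt 0 (offset y))" using B by simp
  then obtain c where c: "c \<in> {pt 1 0, pt (-1) 0}" "gdiv p c y' \<in> the_class (pt 0 (offset y))"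
    using factorisation_transfer[OF pair_class_pt B(1) X(1) y(1) y(2) y0] by blast
  obtain s where cs: "c = pt s 0" using c by blast
  have "gdiv p c y' = pt (fst y' - s) (offset y')" using pt_offset[OF yG(2)] cs gdiv_pt by (metis diff_zero)
  moreover have "fst (gdiv p c y') = 0" using fst_the_class_cases[OF pt_in_Gc c(2)] by simp
  ultimately show ?thesis using c(2) by simp
qed

lemma card_doubleton_Int: "a \<noteq> b \<Longrightarrow> card ({a, b} \<inter> X) = (if a \<in> X then 1 else 0) + (if b \<in> X then 1 else 0)"
  by (cases "a \<in> X"; cases "b \<in> X") (auto simp: Int_insert_left)

lemma card_level1_fibre_eq:
  assumes X: "X \<in> D" "\<forall>y\<in>X. \<bar>fst y\<bar> = 1" and v: "pt 0 v' \<in> the_class (pt 0 v)"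
  shows "card ({pt 1 v, pt (-1) v} \<inter> X) = card ({pt 1 v', pt (-1) v'} \<inter> X)"
proof -
  have set_eq: "{y\<in>X. gdiv p y (pt 0 w) \<in> {pt 1 0, pt (-1) 0}} = {pt 1 w, pt (-1) w} \<inter> X" for w
  proof
    show "{y\<in>X. gdiv p y (pt 0 w) \<in> {pt 1 0, pt (-1) 0}} \<subseteq> {pt 1 w, pt (-1) w} \<inter> X"
    proof
      fix y assume y: "y \<in> {y\<in>X. gdiv p y (pt 0 w) \<in> {pt 1 0, pt (-1) 0}}"
      then have yG: "y \<in> Gc p" using X class_subset_Gc by blast
      obtain n u where ynu: "y = pt n u" using pt_offset[OF yG] by metis
      have "pt (0 - n) (w - u) \<in> {pt 1 0, pt (-1) 0}" using y ynu gdiv_pt by simp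
      then have "(w - u) mod int p = 0" by (auto simp: pt_eq_iff)
      then have "int p dvd (w - u)" by (simp only: dvd_eq_mod_eq_0)
      then have "w mod int p = u mod int p" by (simp only: mod_eq_dvd_iff)
      then have "u mod int p = w mod int p" by simp
      moreover have "n = 1 \<or> n = -1" using X(2) y ynu by auto
      ultimately show "y \<in> {pt 1 w, pt (-1) w} \<inter> X" using y ynu pt_eq_iff by auto
    qed
    show "{pt 1 w, pt (-1) w} \<inter> X \<subseteq> {y\<in>X. gdiv p y (pt 0 w) \<in> {pt 1 0, pt (-1) 0}}"
      using gdiv_pt by auto
  qed
  have "card {y\<in>X. gdiv p y (pt 0 v) \<in> {pt 1 0, pt (-1) 0}} = card {y\<in>X. gdiv p y (pt 0 v') \<in> {pt 1 0, pt (-1) 0}}"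
    using class_constD[OF card_factorisations_class_const[OF X(1) pair_class_pt] the_class_in_D[OF pt_in_Gc] mem_the_class[OF pt_in_Gc] v] .
  then show ?thesis using set_eq by simp
qed

end




context sym_schur_ring_inverse_pair
begin

abbreviation "reflect \<equiv> dil (-1) 1"

definition level_1 :: "(int \<times> int) set \<Rightarrow> bool" where
  "level_1 X \<longleftrightarrow> (\<forall>y\<in>X. \<bar>fst y\<bar> = 1)"

lemma pt_0_offset: "pt 0 (offset (pt n u)) = pt 0 u"
  using offset_pt_mod[of n u] pt_eq_iff by simp

lemma pt_1_neq_pt_neg1: "pt 1 v \<noteq> pt (-1) v" by (simp add: pt_eq_iff)

lemma reflect_pt: "reflect (pt n u) = pt (- n) u" using dil_pt by simp

lemma other_in_fibre:
  assumes "card ({pt 1 v, pt (-1) v} \<inter> W) = 1" "pt s v \<notin> W" "s = 1 \<or> s = -1"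
  shows "pt (- s) v \<in> W"
proof -
  have c: "(if pt 1 v \<in> W then 1 else 0) + (if pt (-1) v \<in> W then 1 else 0) = (1::nat)"
    using assms(1) card_doubleton_Int[OF pt_1_neq_pt_neg1, of v W] by simp
  show ?thesis using assms(3)
  proof
    assume s: "s = 1"
    then have "pt 1 v \<notin> W" using assms(2) by simp
    then show ?thesis using c s by (cases "pt (-1) v \<in> W") auto
  next
    assume s: "s = -1"
    then have "pt (-1) v \<notin> W" using assms(2) by simp
    then show ?thesis using c s by (cases "pt 1 v \<in> W") auto
  qed
qed

lemma card_fibre_2I:
  assumes "pt s v \<in> X" "pt (- s) v \<in> X" "s = 1 \<or> s = -1"
  shows "card ({pt 1 v, pt (-1) v} \<inter> X) = 2"
proof -
  have "pt 1 v \<in> X \<and> pt (-1) v \<in> X" using assms by auto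
  then show ?thesis using card_doubleton_Int[OF pt_1_neq_pt_neg1, of v X] by simp
qed

lemma card_fibre_2D:
  assumes "card ({pt 1 v, pt (-1) v} \<inter> X) = 2"
  shows "pt 1 v \<in> X" "pt (-1) v \<in> X"
proof -
  have c: "(if pt 1 v \<in> X then 1 else 0) + (if pt (-1) v \<in> X then 1 else 0) = (2::nat)"
    using assms card_doubleton_Int[OF pt_1_neq_pt_neg1, of v X] by simp
  show "pt 1 v \<in> X" using c by (cases "pt 1 v \<in> X"; cases "pt (-1) v \<in> X") auto
  show "pt (-1) v \<in> X" using c by (cases "pt 1 v \<in> X"; cases "pt (-1) v \<in> X") auto
qed

lemma card_fibre_ge_1:
  assumes X: "X \<in> D" "level_1 X" and y: "y \<in> X"
  shows "card ({pt 1 (offset y), pt (-1) (offset y)} \<inter> X) \<ge> 1"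
proof -
  have yG: "y \<in> Gc p" using X y class_subset_Gc by blast
  have "y = pt (fst y) (offset y)" using pt_offset[OF yG] by simp
  moreover have "fst y = 1 \<or> fst y = -1" using X(2) y unfolding level_1_def by auto
  ultimately have "y \<in> {pt 1 (offset y), pt (-1) (offset y)} \<inter> X" using y by auto
  then show ?thesis by (metis One_nat_def Suc_leI card_gt_0_iff empty_iff finite.emptyI finite.insertI finite_Int)
qed

lemma level1_classes_eq_or_reflect:
  assumes X: "X \<in> D" "level_1 X" and W: "W \<in> D" "level_1 W" and x: "x \<in> X" and w: "w \<in> W"
    and xw: "pt 0 (offset x) \<in> the_class (pt 0 (offset w))"
  shows "X = W \<or> X = reflect ` W"
proof (cases "X = W")
  case True then show ?thesis by simp
next
  case False
  then have disj: "X \<inter> W = {}" using X W class_eqI by blast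
  define T where "T = the_class (pt 0 (offset w))"
  have TD: "T \<in> D" unfolding T_def using the_class_in_D[OF pt_in_Gc] mem_the_class[OF pt_in_Gc] by blast
  have "pt 0 (offset x) \<in> T" using xw T_def by simp
  then have "the_class (pt 0 (offset x)) = T" by (rule the_class_eq[OF TD])
  then have Tx: "T = the_class (pt 0 (offset x))" by simp
  define cX where "cX v = card ({pt 1 v, pt (-1) v} \<inter> X)" for v
  define cW where "cW v = card ({pt 1 v, pt (-1) v} \<inter> W)" for v
  have cXc: "cX v = cX (offset x)" if "pt 0 v \<in> T" for v
    unfolding cX_def using card_level1_fibre_eq[OF X(1) X(2)[unfolded level_1_def]] that Tx by simp
  have cWc: "cW v = cW (offset w)" if "pt 0 v \<in> T" for v
    unfolding cW_def using card_level1_fibre_eq[OF W(1) W(2)[unfolded level_1_def]] that T_def by simp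
  have uxT: "pt 0 (offset x) \<in> T" using xw T_def by simp
  have X1: "cX (offset x) \<ge> 1" unfolding cX_def using card_fibre_ge_1[OF X x] .
  have W1: "cW (offset w) \<ge> 1" unfolding cW_def using card_fibre_ge_1[OF W w] .
  have sum2: "cX v + cW v \<le> 2" for v
  proof -
    have "cX v + cW v = card (({pt 1 v, pt (-1) v} \<inter> X) \<union> ({pt 1 v, pt (-1) v} \<inter> W))"
      unfolding cX_def cW_def using disj by (subst card_Un_disjoint) auto
    also have "\<dots> \<le> card {pt 1 v, pt (-1) v}" by (rule card_mono) auto
    also have "\<dots> \<le> 2" by (simp add: card_insert_le_m1)
    finally show ?thesis .
  qed
  have one: "cX v = 1 \<and> cW v = 1" if "pt 0 v \<in> T" for v
  proof -
    have "cX (offset x) + cW (offset x) \<le> 2" using sum2 .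
    moreover have "cW (offset x) = cW (offset w)" using cWc uxT by simp
    ultimately have "cX (offset x) = 1" "cW (offset w) = 1" using X1 W1 by auto
    then show ?thesis using cXc cWc that by simp
  qed
  have XT: "pt 0 (offset y) \<in> T" if "y \<in> X" for y using level0_projection_same_class[OF X(1) X(2)[unfolded level_1_def] x that] Tx by simp
  have WT: "pt 0 (offset y) \<in> T" if "y \<in> W" for y using level0_projection_same_class[OF W(1) W(2)[unfolded level_1_def] w that] T_def by simp
  have "X = reflect ` W"
  proof
    show "X \<subseteq> reflect ` W"
    proof
      fix y assume y: "y \<in> X"
      have yG: "y \<in> Gc p" using X y class_subset_Gc by blast
      define v where "v = offset y"
      have yb: "y = pt (fst y) v" unfolding v_def using pt_offset[OF yG] by simp
      have fy: "fst y = 1 \<or> fst y = -1" using X(2) y unfolding level_1_def by auto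
      have o: "cX v = 1" "cW v = 1" using one XT[OF y] unfolding v_def by auto
      have yX: "pt (fst y) v \<in> X" using y yb[symmetric] by simp
      have "y \<notin> W" using y disj by blast
      then have "pt (fst y) v \<notin> W" using yb[symmetric] by simp
      then have "pt (- fst y) v \<in> W" using other_in_fibre[OF o(2)[unfolded cW_def]] fy by blast
      moreover have "reflect (pt (- fst y) v) = y" using yb[symmetric] reflect_pt by simp
      ultimately show "y \<in> reflect ` W" by (metis image_eqI)
    qed
    show "reflect ` W \<subseteq> X"
    proof
      fix z assume "z \<in> reflect ` W"
      then obtain y where y: "y \<in> W" "z = reflect y" by blast
      have yG: "y \<in> Gc p" using W y class_subset_Gc by blast
      define v where "v = offset y"
      have yb: "y = pt (fst y) v" unfolding v_def using pt_offset[OF yG] by simp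
      have fy: "fst y = 1 \<or> fst y = -1" using W(2) y unfolding level_1_def by auto
      have o: "cX v = 1" "cW v = 1" using one WT[OF y(1)] unfolding v_def by auto
      have "y \<notin> X" using y disj by blast
      then have "pt (fst y) v \<notin> X" using yb[symmetric] by simp
      then have "pt (- fst y) v \<in> X" using other_in_fibre[OF o(1)[unfolded cX_def]] fy by blast
      moreover have "z = pt (- fst y) v" using y(2) yb reflect_pt by metis
      ultimately show "z \<in> X" by simp
    qed
  qed
  then show ?thesis by simp
qed

lemma inj_on_reflect: "inj_on reflect (Gc p)"
  using inj_on_dil[of "-1" 1] int_p_gt_1 by (simp add: zdvd_not_zless)

lemma reflect_level1_class_in_D:
  assumes X: "X \<in> D" "level_1 X"
  shows "reflect ` X \<in> D"
proof -
  obtain x where x: "x \<in> X" using class_nonempty[OF X(1)] by blast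
  have xG: "x \<in> Gc p" using X x class_subset_Gc by blast
  define v where "v = offset x"
  have xb: "x = pt (fst x) v" unfolding v_def using pt_offset[OF xG] by simp
  have fx: "fst x = 1 \<or> fst x = -1" using X(2) x unfolding level_1_def by auto
  have Sx: "reflect x = pt (- fst x) v" using xb reflect_pt by metis
  have SxG: "reflect x \<in> Gc p" using dil_in_Gc by simp
  define X' where "X' = the_class (reflect x)"
  have X': "X' \<in> D" "reflect x \<in> X'" unfolding X'_def using the_class_in_D[OF SxG] mem_the_class[OF SxG] by auto
  have lX': "level_1 X'" unfolding level_1_def
  proof
    fix y assume "y \<in> X'"
    then have "fst y = fst (reflect x) \<or> fst y = - fst (reflect x)" using fst_class_cases[OF X'(1) X'(2)] by simp
    then show "\<bar>fst y\<bar> = 1" using Sx fx by auto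
  qed
  have "pt 0 (offset (reflect x)) \<in> the_class (pt 0 (offset x))"
  proof -
    have "pt 0 (offset (reflect x)) = pt 0 (offset x)" using Sx pt_0_offset v_def by simp
    then show ?thesis using the_class_in_D[OF pt_in_Gc] mem_the_class[OF pt_in_Gc] by simp
  qed
  then have "X' = X \<or> X' = reflect ` X" using level1_classes_eq_or_reflect[OF X'(1) lX' X X'(2) x] by simp
  then show ?thesis
  proof
    assume "X' = reflect ` X" then show ?thesis using X' by simp
  next
    assume "X' = X"
    then have SxX: "reflect x \<in> X" using X' by simp
    have "pt (fst x) v \<in> X" using x xb[symmetric] by simp
    moreover have "pt (- fst x) v \<in> X" using SxX Sx by simp
    ultimately have c2: "card ({pt 1 v, pt (-1) v} \<inter> X) = 2" using card_fibre_2I fx by blast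
    have sub: "reflect ` X \<subseteq> X"
    proof
      fix z assume "z \<in> reflect ` X"
      then obtain y where y: "y \<in> X" "z = reflect y" by blast
      have yG: "y \<in> Gc p" using X y class_subset_Gc by blast
      have yb: "y = pt (fst y) (offset y)" using pt_offset[OF yG] by simp
      have fy: "fst y = 1 \<or> fst y = -1" using X(2) y unfolding level_1_def by auto
      have "pt 0 (offset y) \<in> the_class (pt 0 v)" using level0_projection_same_class[OF X(1) X(2)[unfolded level_1_def] x y(1)] v_def by simp
      then have "card ({pt 1 (offset y), pt (-1) (offset y)} \<inter> X) = 2"
        using card_level1_fibre_eq[OF X(1) X(2)[unfolded level_1_def]] c2 by simp
      then have "pt 1 (offset y) \<in> X" "pt (-1) (offset y) \<in> X" using card_fibre_2D by blast+
      moreover have "z = pt (- fst y) (offset y)" using y(2) yb reflect_pt by metis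
      ultimately show "z \<in> X" using fy by auto
    qed
    have "card (reflect ` X) = card X"
      using card_image[OF inj_on_subset[OF inj_on_reflect class_subset_Gc[OF X(1)]]] .
    then have "reflect ` X = X" using card_subset_eq[OF class_finite[OF X(1)] sub] by simp
    then show ?thesis using X by simp
  qed
qed

lemma dil_level01_class_in_D:
  assumes X: "X \<in> D" "levels_01 X" and e: "e = 1 \<or> e = -1" and m: "m \<ge> 1" "\<not> p dvd m"
  shows "dil e (int m) ` X \<in> D"
proof (cases "e = 1")
  case True then show ?thesis using dil_class_in_D[OF X m] by simp
next
  case False
  then have e1: "e = -1" using e by simp
  define Y where "Y = dil 1 (int m) ` X"
  have YD: "Y \<in> D" unfolding Y_def using dil_class_in_D[OF X m] .
  have lY: "levels_01 Y" unfolding Y_def using levels_01_dil[OF X(2) _ class_subset_Gc[OF X(1)]] by simp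
  have eq: "dil e (int m) ` X = reflect ` Y"
  proof -
    have "\<forall>y\<in>X. dil e (int m) y = reflect (dil 1 (int m) y)" using dil_dil class_subset_Gc[OF X(1)] e1 by auto
    then show ?thesis unfolding Y_def by (simp add: image_image)
  qed
  show ?thesis using lY unfolding levels_01_def
  proof (elim disjE)
    assume l0: "\<forall>y\<in>Y. fst y = 0"
    have "\<forall>y\<in>Y. reflect y = y"
    proof
      fix y assume y: "y \<in> Y"
      have yG: "y \<in> Gc p" using YD y class_subset_Gc by blast
      have "y = pt 0 (offset y)" using pt_offset[OF yG] l0 y by metis
      then show "reflect y = y" using reflect_pt by (metis minus_zero)
    qed
    then have "reflect ` Y = Y" by simp
    then show ?thesis using eq YD by simp
  next
    assume "\<forall>y\<in>Y. \<bar>fst y\<bar> = 1"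
    then have "level_1 Y" unfolding level_1_def .
    then show ?thesis using eq reflect_level1_class_in_D[OF YD] by simp
  qed
qed

end

context sym_schur_ring_inverse_pair
begin

abbreviation "W1 \<equiv> the_class (pt 1 1)"
abbreviation "T0 \<equiv> the_class (pt 0 1)"

lemma W1_in_D: "W1 \<in> D" "pt 1 1 \<in> W1" using the_class_in_D[OF pt_in_Gc] mem_the_class[OF pt_in_Gc] by auto
lemma T0_in_D: "T0 \<in> D" "pt 0 1 \<in> T0" using the_class_in_D[OF pt_in_Gc] mem_the_class[OF pt_in_Gc] by auto

lemma level_1_the_class: assumes "g \<in> Gc p" "\<bar>fst g\<bar> = 1" shows "level_1 (the_class g)"
  unfolding level_1_def using fst_the_class_cases[OF assms(1)] assms(2) by fastforce

lemma level_0_the_class: assumes "g \<in> Gc p" "fst g = 0" shows "\<forall>y\<in>the_class g. fst y = 0"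
  using fst_the_class_cases[OF assms(1)] assms(2) by fastforce

lemma level_1_W1: "level_1 W1" using level_1_the_class[OF pt_in_Gc] by simp
lemma levels_01_W1: "levels_01 W1" using level_1_W1 unfolding levels_01_def level_1_def by blast
lemma levels_01_T0: "levels_01 T0" using level_0_the_class[OF pt_in_Gc] unfolding levels_01_def by simp

lemma nat_mod_props:
  assumes "u mod int p \<noteq> 0"
  shows "nat (u mod int p) \<ge> 1" "\<not> p dvd nat (u mod int p)" "int (nat (u mod int p)) = u mod int p"
proof -
  have r: "0 \<le> u mod int p" "u mod int p < int p" using int_p_gt_1 by auto
  show "int (nat (u mod int p)) = u mod int p" using r by simp
  show "nat (u mod int p) \<ge> 1" using r assms by linarith
  show "\<not> p dvd nat (u mod int p)"
  proof
    assume "p dvd nat (u mod int p)"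
    moreover have "0 < nat (u mod int p)" using assms r by linarith
    ultimately have "p \<le> nat (u mod int p)" by (rule dvd_imp_le)
    then show False using r by linarith
  qed
qed

lemma dil_pt_nat: "u mod int p \<noteq> 0 \<Longrightarrow> dil e (int (nat (u mod int p))) (pt n v) = pt (e * n) (u * v)"
  using nat_mod_props dil_pt pt_eq_iff by (simp add: mod_mult_left_eq)

lemma int_dvd_nat: "\<not> p dvd m \<Longrightarrow> \<not> int p dvd int m" by simp

lemma the_class_pair: "the_class (pt s 0) = {pt 1 0, pt (-1) 0}" if "s = 1 \<or> s = -1"
proof -
  have "pt s 0 \<in> {pt 1 0, pt (-1) 0}" using that by auto
  then show ?thesis by (rule the_class_eq[OF pair_class_pt])
qed

lemma the_class_zero: "the_class (0, 0) = {(0, 0)}" using the_class_eq[OF zero_class] by simp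

lemma pt_0_eq_zero: "pt 0 u = (0, 0) \<longleftrightarrow> u mod int p = 0"
  by (simp add: pt_def)

lemma dil_mem_the_class_low:
  assumes e: "e = 1 \<or> e = -1" and m: "m \<ge> 1" "\<not> p dvd m" and W: "pt e (int m) \<in> W1"
    and y: "y \<in> Gc p" "\<bar>fst y\<bar> \<le> 1"
  shows "dil e (int m) y \<in> the_class y"
proof -
  define a where "a = fst y"
  define u where "u = offset y"
  have yb: "y = pt a u" unfolding a_def u_def using pt_offset[OF y(1)] by simp
  have bm: "pt 0 (int m) \<in> T0"
    using level0_projection_same_class[OF W1_in_D(1) level_1_W1[unfolded level_1_def] W1_in_D(2) W] pt_0_offset by simp
  consider "a = 0" | "a = 1 \<or> a = -1" using y(2) a_def by linarith
  then show ?thesis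
  proof cases
    case 1
    show ?thesis
    proof (cases "u mod int p = 0")
      case True
      then have "y = (0, 0)" using yb 1 pt_0_eq_zero by simp
      moreover have "dil e (int m) (0, 0) = (0, 0)"
      proof -
        have z: "pt 0 0 = (0, 0)" using pt_0_eq_zero by simp
        have "dil e (int m) (pt 0 0) = pt 0 0" using dil_pt[of e "int m" 0 0] by simp
        then show ?thesis using z by simp
      qed
      ultimately show ?thesis using the_class_zero by simp
    next
      case False
      define un where "un = nat (u mod int p)"
      have un: "un \<ge> 1" "\<not> p dvd un" using nat_mod_props[OF False] un_def by auto
      have GD: "dil 1 (int un) ` T0 \<in> D" using dil_level01_class_in_D[OF T0_in_D(1) levels_01_T0 _ un] by simp
      have "dil 1 (int un) (pt 0 1) = y" unfolding un_def using dil_pt_nat[OF False] yb 1 by simp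
      then have "y \<in> dil 1 (int un) ` T0" using T0_in_D(2) by (metis image_eqI)
      then have eq: "the_class y = dil 1 (int un) ` T0" by (rule the_class_eq[OF GD])
      have t1: "dil 1 (int un) (pt 0 (int m)) = pt 0 (u * int m)"
        unfolding un_def using dil_pt_nat[OF False, of 1 0 "int m"] by simp
      have t2: "dil e (int m) y = pt 0 (int m * u)" using yb 1 dil_pt by simp
      have "dil 1 (int un) (pt 0 (int m)) = dil e (int m) y" using t1 t2 by (simp add: mult.commute)
      then show ?thesis using eq bm by (metis image_eqI)
    qed
  next
    case 2
    show ?thesis
    proof (cases "u mod int p = 0")
      case True
      then have "y = pt a 0" using yb pt_eq_iff by simp
      then have "the_class y = {pt 1 0, pt (-1) 0}" using the_class_pair 2 by simp
      moreover have "dil e (int m) y = pt (e * a) 0" using \<open>y = pt a 0\<close> dil_pt by simp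
      moreover have "pt (e * a) 0 \<in> {pt 1 0, pt (-1) 0}" using e 2 by (elim disjE) simp_all
      ultimately show ?thesis by simp
    next
      case False
      define un where "un = nat (u mod int p)"
      have un: "un \<ge> 1" "\<not> p dvd un" using nat_mod_props[OF False] un_def by auto
      have GD: "dil a (int un) ` W1 \<in> D" using dil_level01_class_in_D[OF W1_in_D(1) levels_01_W1 2 un] .
      have "dil a (int un) (pt 1 1) = y" unfolding un_def using dil_pt_nat[OF False] yb by simp
      then have "y \<in> dil a (int un) ` W1" using W1_in_D(2) by (metis image_eqI)
      then have eq: "the_class y = dil a (int un) ` W1" by (rule the_class_eq[OF GD])
      have t1: "dil a (int un) (pt e (int m)) = pt (a * e) (u * int m)"
        unfolding un_def using dil_pt_nat[OF False, of a e "int m"] by simp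
      have t2: "dil e (int m) y = pt (e * a) (int m * u)" using yb dil_pt by simp
      have "dil a (int un) (pt e (int m)) = dil e (int m) y" using t1 t2 by (simp add: mult.commute)
      then show ?thesis using eq W by (metis image_eqI)
    qed
  qed
qed

lemma dil_mem_the_class:
  assumes e: "e = 1 \<or> e = -1" and m: "m \<ge> 1" "\<not> p dvd m" and W: "pt e (int m) \<in> W1"
    and y: "y \<in> Gc p"
  shows "dil e (int m) y \<in> the_class y"
proof (cases "\<bar>fst y\<bar> \<le> 1")
  case True then show ?thesis using dil_mem_the_class_low[OF e m W y] by simp
next
  case False
  define a where "a = fst y"
  define u where "u = offset y"
  have yb: "y = pt a u" unfolding a_def u_def using pt_offset[OF y] by simp
  define s where "s = sgn a"
  have s: "s = 1 \<or> s = -1" using False a_def s_def by (auto simp: sgn_if)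
  obtain k where k: "\<bar>a\<bar> = int (Suc k)"
  proof -
    have "\<bar>a\<bar> = int (Suc (nat \<bar>a\<bar> - 1))" using False a_def by simp
    then show ?thesis by (rule that)
  qed
  have as: "a = s * int (Suc k)" using k s_def by (metis abs_mult_sgn mult.commute)
  have "dil e (int m) (pt s u) \<in> the_class (pt s u)" using dil_mem_the_class_low[OF e m W pt_in_Gc] s by auto
  then have "pt (e * s) (int m * u) \<in> the_class (pt s u)" using dil_pt by simp
  moreover have es: "e * s = 1 \<or> e * s = -1" using e s by auto
  ultimately have "pt (e * s * int (Suc k)) (int m * u) \<in> the_class (pt (s * int (Suc k)) u)"
    using pt_mem_the_class_iff[OF s es] by blast
  then show ?thesis using yb as dil_pt by (simp add: mult.assoc)
qed

lemma dil_preserves_classes: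
  assumes e: "e = 1 \<or> e = -1" and m: "m \<ge> 1" "\<not> p dvd m" and W: "pt e (int m) \<in> W1"
  shows "\<forall>E\<in>D. dil e (int m) ` E = E"
proof
  fix E assume E: "E \<in> D"
  have sub: "dil e (int m) ` E \<subseteq> E"
  proof
    fix z assume "z \<in> dil e (int m) ` E"
    then obtain y where y: "y \<in> E" "z = dil e (int m) y" by blast
    have yG: "y \<in> Gc p" using y E class_subset_Gc by blast
    have "the_class y = E" using the_class_eq[OF E y(1)] .
    then show "z \<in> E" using dil_mem_the_class[OF e m W yG] y by simp
  qed
  have "card (dil e (int m) ` E) = card E"
    using card_image[OF inj_on_subset[OF inj_on_dil[OF e int_dvd_nat[OF m(2)]] class_subset_Gc[OF E]]] .
  then show "dil e (int m) ` E = E" using card_subset_eq[OF class_finite[OF E] sub] by simp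
qed

end




context sym_schur_ring_inverse_pair
begin

lemma reflect_reflect: "y \<in> Gc p \<Longrightarrow> reflect (reflect y) = y"
  using dil_dil dil_1_1 by simp

lemma reflect_image_reflect_image: "W \<subseteq> Gc p \<Longrightarrow> reflect ` reflect ` W = W"
proof -
  assume "W \<subseteq> Gc p"
  then have "\<forall>y\<in>W. reflect (reflect y) = y" using reflect_reflect by blast
  then show ?thesis by (simp add: image_image)
qed

lemma level_1_dil_image: "level_1 X \<Longrightarrow> X \<subseteq> Gc p \<Longrightarrow> e = 1 \<or> e = -1 \<Longrightarrow> level_1 (dil e m ` X)"
proof -
  assume a: "level_1 X" "X \<subseteq> Gc p" "e = 1 \<or> e = -1"
  show ?thesis unfolding level_1_def
  proof
    fix z assume "z \<in> dil e m ` X"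
    then obtain y where y: "y \<in> X" "z = dil e m y" by blast
    have "fst z = e * fst y" using y pt_offset[of y] a(2) dil_pt by (metis fst_pt subsetD)
    then show "\<bar>fst z\<bar> = 1" using a(1,3) y unfolding level_1_def by (auto simp: abs_mult)
  qed
qed

lemma mod_mult_props:
  assumes "a \<ge> 1" "\<not> p dvd a" "b \<ge> 1" "\<not> p dvd b"
  shows "(a * b) mod p \<ge> 1" "(a * b) mod p < p" "\<not> p dvd ((a * b) mod p)"
proof -
  have "\<not> p dvd a * b" using assms prime_p prime_dvd_mult_iff by blast
  then have nz: "(a * b) mod p \<noteq> 0" by (simp add: dvd_eq_mod_eq_0)
  then show "(a * b) mod p \<ge> 1" by simp
  show "(a * b) mod p < p" using p_gt_0 by simp
  show "\<not> p dvd ((a * b) mod p)" using nz p_gt_0 by (simp add: dvd_eq_mod_eq_0)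
qed

lemma multiplier_witness:
  assumes u: "u mod int p \<noteq> 0" and u': "u' mod int p \<noteq> 0"
  obtains w1 m where "w1 \<ge> 1" "\<not> p dvd w1" "m \<ge> 1" "m < p" "\<not> p dvd m"
    "(int w1 * u) mod int p = 1 mod int p" "(int w1 * u') mod int p = int m mod int p" "(int m * u) mod int p = u' mod int p"
proof -
  define un where "un = nat (u mod int p)"
  define un' where "un' = nat (u' mod int p)"
  have un: "un \<ge> 1" "\<not> p dvd un" "int un = u mod int p" using nat_mod_props[OF u] un_def by auto
  have un': "un' \<ge> 1" "\<not> p dvd un'" "int un' = u' mod int p" using nat_mod_props[OF u'] un'_def by auto
  obtain w1 where w1: "w1 \<ge> 1" "\<not> p dvd w1" "(int un * int w1) mod int p = 1" "(int w1 * int un) mod int p = 1"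
    using inverse_mod_nat[OF un(1,2)] by blast
  define m where "m = (un' * w1) mod p"
  have m: "m \<ge> 1" "m < p" "\<not> p dvd m" using mod_mult_props[OF un'(1,2) w1(1,2)] m_def by auto
  have im: "int m = (int un' * int w1) mod int p" unfolding m_def by (simp add: of_nat_mod)
  have c1: "(int w1 * u) mod int p = 1 mod int p"
  proof -
    have "(int w1 * u) mod int p = (int w1 * (u mod int p)) mod int p" by (simp add: mod_mult_right_eq)
    also have "\<dots> = 1" using un(3) w1(4) by simp
    finally show ?thesis using int_p_gt_1 by simp
  qed
  have c2: "(int w1 * u') mod int p = int m mod int p"
  proof -
    have "(int w1 * u') mod int p = (int w1 * (u' mod int p)) mod int p" by (simp add: mod_mult_right_eq)
    also have "\<dots> = (int un' * int w1) mod int p" using un'(3) by (simp add: mult.commute)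
    finally show ?thesis using im by simp
  qed
  have c3: "(int m * u) mod int p = u' mod int p"
  proof -
    have "(int m * u) mod int p = ((int un' * int w1) * u) mod int p" using im by (simp add: mod_mult_left_eq)
    also have "\<dots> = (int un' * (int w1 * u)) mod int p" by (simp add: mult.assoc)
    also have "\<dots> = (int un' * ((int w1 * u) mod int p)) mod int p" by (simp add: mod_mult_right_eq)
    also have "\<dots> = int un' mod int p" using c1 int_p_gt_1 by simp
    also have "\<dots> = u' mod int p" using un'(3) by simp
    finally show ?thesis .
  qed
  show ?thesis using that[OF w1(1,2) m c1 c2 c3] .
qed

lemma W1_witness_of_level_0:
  assumes m: "m \<ge> 1" "\<not> p dvd m" and T: "pt 0 (int m) \<in> T0"
  shows "pt 1 (int m) \<in> W1 \<or> pt (-1) (int m) \<in> W1"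
proof -
  define X where "X = dil 1 (int m) ` W1"
  have XD: "X \<in> D"
    unfolding X_def using dil_level01_class_in_D[OF W1_in_D(1) levels_01_W1 _ m] by simp
  have lX: "level_1 X"
    unfolding X_def using level_1_dil_image[OF level_1_W1 class_subset_Gc[OF W1_in_D(1)]] by simp
  have bX: "pt 1 (int m) \<in> X"
    unfolding X_def using W1_in_D(2) dil_pt by (metis image_eqI mult_1 mult_1_right)
  have "pt 0 (offset (pt 1 (int m))) \<in> the_class (pt 0 (offset (pt 1 1)))"
    using T pt_0_offset by simp
  then have "X = W1 \<or> X = reflect ` W1"
    using level1_classes_eq_or_reflect[OF XD lX W1_in_D(1) level_1_W1 bX W1_in_D(2)] by simp
  then show ?thesis
  proof
    assume "X = reflect ` W1"
    then have "reflect (pt 1 (int m)) \<in> reflect ` reflect ` W1" using bX by blast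
    then show ?thesis
      using reflect_image_reflect_image[OF class_subset_Gc[OF W1_in_D(1)]] reflect_pt by simp
  qed (use bX in simp)
qed

lemma transitive_level_0:
  assumes E: "E \<in> D" and g: "g \<in> E" "fst g = 0" and h: "h \<in> E"
  shows "\<exists>e m. (e = 1 \<or> e = -1) \<and> m \<ge> 1 \<and> m < p \<and> dil e (int m) g = h \<and> pt e (int m) \<in> W1"
proof -
  have gG: "g \<in> Gc p" using g E class_subset_Gc by blast
  have hG: "h \<in> Gc p" using h E class_subset_Gc by blast
  have Ecl: "the_class g = E" using the_class_eq[OF E g(1)] .
  have fh: "fst h = 0" using fst_class_cases[OF E g(1) h] g(2) by simp
  define u where "u = offset g"
  define u' where "u' = offset h"
  have gb: "g = pt 0 u" unfolding u_def using pt_offset[OF gG] g(2) by simp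
  have hb: "h = pt 0 u'" unfolding u'_def using pt_offset[OF hG] fh by simp
  show ?thesis
  proof (cases "u mod int p = 0")
    case True
    then have "g = (0, 0)" using gb pt_0_eq_zero by simp
    then have "E = {(0, 0)}" using Ecl the_class_zero by simp
    then have "h = g" using h \<open>g = (0, 0)\<close> by simp
    then show ?thesis using dil_1_1 gG W1_in_D(2) p_gt_1 by (intro exI[of _ 1] exI[of _ 1]) simp
  next
    case False
    have u'nz: "u' mod int p \<noteq> 0"
    proof
      assume "u' mod int p = 0"
      then have "h = (0, 0)" using hb pt_0_eq_zero by simp
      then have "E = {(0, 0)}" using the_class_eq[OF E h] the_class_zero by simp
      then show False using g gb pt_0_eq_zero False by simp
    qed
    obtain w1 m where wm: "w1 \<ge> 1" "\<not> p dvd w1" "m \<ge> 1" "m < p" "\<not> p dvd m"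
      "(int w1 * u) mod int p = 1 mod int p" "(int w1 * u') mod int p = int m mod int p"
      "(int m * u) mod int p = u' mod int p"
      using multiplier_witness[OF False u'nz] by blast
    have dil_g: "dil e (int m) g = h" for e
      using gb hb dil_pt pt_eq_iff wm(8) by simp
    have "dil 1 (int w1) ` E \<in> D"
      using level_0_the_class[OF gG g(2)] Ecl dil_level01_class_in_D[OF E _ _ wm(1,2)]
      unfolding levels_01_def by simp
    moreover have "pt 0 1 \<in> dil 1 (int w1) ` E"
      using gb dil_pt pt_eq_iff wm(6) g(1) by (metis image_eqI mult_zero_right)
    ultimately have "dil 1 (int w1) ` E = T0" using the_class_eq by simp
    moreover have "dil 1 (int w1) h = pt 0 (int m)" using hb dil_pt pt_eq_iff wm(7) by simp
    ultimately have "pt 0 (int m) \<in> T0" using h by (metis image_eqI)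
    then have "pt 1 (int m) \<in> W1 \<or> pt (-1) (int m) \<in> W1"
      using W1_witness_of_level_0[OF wm(3,5)] by blast
    then show ?thesis using dil_g wm(3,4) by blast
  qed
qed

lemma exists_neg_pt_in_W1: "\<exists>m. m \<ge> 1 \<and> m < p \<and> pt (-1) (int m) \<in> W1"
proof -
  obtain y where y: "y \<in> W1" "fst y = - 1" using class_has_neg_fst[OF W1_in_D] by auto
  have yG: "y \<in> Gc p" using y class_subset_Gc[OF W1_in_D(1)] by blast
  define t where "t = offset y"
  have yt: "y = pt (-1) t" unfolding t_def using pt_offset[OF yG] y(2) by simp
  have "t mod int p \<noteq> 0"
  proof
    assume "t mod int p = 0"
    then have "y \<in> {pt 1 0, pt (-1) 0}" using yt pt_eq_iff by simp
    then have "W1 = {pt 1 0, pt (-1) 0}" using class_eqI[OF W1_in_D(1) pair_class_pt y(1)] by simp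
    then show False using W1_in_D(2) pt_eq_iff int_p_gt_1 by auto
  qed
  moreover have "0 \<le> t mod int p" "t mod int p < int p" using int_p_gt_1 by simp_all
  ultimately have "nat (t mod int p) \<ge> 1" "nat (t mod int p) < p" "pt (-1) (int (nat (t mod int p))) = y"
    using nat_mod_props yt pt_eq_iff by (auto simp: nat_less_iff)
  then show ?thesis using y(1) by metis
qed

lemma transitive_level_1:
  assumes E: "E \<in> D" and g: "g \<in> E" "\<bar>fst g\<bar> = 1" and h: "h \<in> E"
  shows "\<exists>e m. (e = 1 \<or> e = -1) \<and> m \<ge> 1 \<and> m < p \<and> dil e (int m) g = h \<and> pt e (int m) \<in> W1"
proof -
  have gG: "g \<in> Gc p" using g E class_subset_Gc by blast
  have hG: "h \<in> Gc p" using h E class_subset_Gc by blast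
  have Ecl: "the_class g = E" using the_class_eq[OF E g(1)] .
  define a where "a = fst g"
  define b where "b = fst h"
  have a: "a = 1 \<or> a = -1" using g(2) a_def by auto
  have ba: "b = a \<or> b = - a" using fst_class_cases[OF E g(1) h] a_def b_def by simp
  have b: "b = 1 \<or> b = -1" using a ba by auto
  define u where "u = offset g"
  define u' where "u' = offset h"
  have gb: "g = pt a u" unfolding u_def a_def using pt_offset[OF gG] by simp
  have hb: "h = pt b u'" unfolding u'_def b_def using pt_offset[OF hG] by simp
  have id11: "dil 1 1 g = g" using dil_1_1 gG by simp
  show ?thesis
  proof (cases "u mod int p = 0")
    case True
    then have g0: "g = pt a 0" using gb pt_eq_iff by simp
    then have EC: "E = {pt 1 0, pt (-1) 0}" using Ecl the_class_pair[OF a] by simp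
    have "h = pt 1 0 \<or> h = pt (-1) 0" using h EC by simp
    then have "h = pt (fst h) 0" by auto
    then have h0: "h = pt b 0" unfolding b_def .
    show ?thesis
    proof (cases "b = a")
      case True
      then have "h = g" using g0 h0 by simp
      then show ?thesis using id11 W1_in_D(2) p_gt_1 by (intro exI[of _ 1] exI[of _ 1]) simp
    next
      case False
      then have bma: "b = - a" using ba by simp
      obtain m where m: "m \<ge> 1" "m < p" "pt (-1) (int m) \<in> W1" using exists_neg_pt_in_W1 by blast
      have "dil (-1) (int m) g = h" using g0 h0 bma dil_pt pt_eq_iff by simp
      then show ?thesis using m by (intro exI[of _ "-1"] exI[of _ m]) simp
    qed
  next
    case False
    have u'nz: "u' mod int p \<noteq> 0"
    proof
      assume "u' mod int p = 0"
      then have "h = pt b 0" using hb pt_eq_iff by simp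
      then have "E = {pt 1 0, pt (-1) 0}" using the_class_eq[OF E h] the_class_pair[OF b] by simp
      then have "g = pt 1 0 \<or> g = pt (-1) 0" using g by auto
      then show False using gb pt_eq_iff False by auto
    qed
    obtain w1 m where wm: "w1 \<ge> 1" "\<not> p dvd w1" "m \<ge> 1" "m < p" "\<not> p dvd m"
      "(int w1 * u) mod int p = 1 mod int p" "(int w1 * u') mod int p = int m mod int p" "(int m * u) mod int p = u' mod int p"
      using multiplier_witness[OF False u'nz] by blast
    define e where "e = a * b"
    have e: "e = 1 \<or> e = -1" unfolding e_def using a b by auto
    have aa: "a * a = 1" using a by auto
    have "e * a = b" unfolding e_def using aa by (metis mult.assoc mult.commute mult_1)
    then have Tg: "dil e (int m) g = h" using gb hb dil_pt pt_eq_iff wm(8) by simp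
    have lE: "levels_01 E" using level_1_the_class[OF gG g(2)] Ecl unfolding levels_01_def level_1_def by simp
    have GD: "dil a (int w1) ` E \<in> D" using dil_level01_class_in_D[OF E lE a wm(1,2)] .
    have "dil a (int w1) g = pt 1 1" using gb dil_pt pt_eq_iff wm(6) aa by simp
    then have "pt 1 1 \<in> dil a (int w1) ` E" using g(1) by (metis image_eqI)
    then have GW: "dil a (int w1) ` E = W1" using the_class_eq[OF GD] by simp
    have "dil a (int w1) h = pt e (int m)" using hb dil_pt pt_eq_iff wm(7) e_def by simp
    then have "pt e (int m) \<in> W1" using GW h by (metis image_eqI)
    then show ?thesis using e wm Tg by blast
  qed
qed

lemma transitive_dil:
  assumes E: "E \<in> D" and g: "g \<in> E" and h: "h \<in> E"
  shows "\<exists>e m. (e = 1 \<or> e = -1) \<and> m \<ge> 1 \<and> m < p \<and> dil e (int m) g = h \<and> pt e (int m) \<in> W1"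
proof -
  have gG: "g \<in> Gc p" using g E class_subset_Gc by blast
  have hG: "h \<in> Gc p" using h E class_subset_Gc by blast
  consider "fst g = 0" | "\<bar>fst g\<bar> = 1" | "\<bar>fst g\<bar> \<ge> 2" by linarith
  then show ?thesis
  proof cases
    case 1 then show ?thesis using transitive_level_0[OF E g 1 h] by blast
  next
    case 2 then show ?thesis using transitive_level_1[OF E g 2 h] by blast
  next
    case 3
    define a where "a = fst g"
    define b where "b = fst h"
    define u where "u = offset g"
    define u' where "u' = offset h"
    have gb: "g = pt a u" unfolding u_def a_def using pt_offset[OF gG] by simp
    have hb: "h = pt b u'" unfolding u'_def b_def using pt_offset[OF hG] by simp
    define s where "s = sgn a"
    have s: "s = 1 \<or> s = -1" using 3 a_def s_def by (auto simp: sgn_if)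
    obtain k where k: "\<bar>a\<bar> = int (Suc k)"
    proof -
      have "\<bar>a\<bar> = int (Suc (nat \<bar>a\<bar> - 1))" using 3 a_def by simp
      then show ?thesis by (rule that)
    qed
    have as: "a = s * int (Suc k)" using k s_def by (metis abs_mult_sgn mult.commute)
    have ba: "b = a \<or> b = - a" using fst_class_cases[OF E g h] a_def b_def by simp
    define s' where "s' = (if b = a then s else - s)"
    have s': "s' = 1 \<or> s' = -1" using s s'_def by auto
    have bs: "b = s' * int (Suc k)" using ba as s'_def by auto
    have "h \<in> the_class g" using the_class_eq[OF E g] h by simp
    then have "pt (s' * int (Suc k)) u' \<in> the_class (pt (s * int (Suc k)) u)" using gb hb as bs by simp
    then have h1: "pt s' u' \<in> the_class (pt s u)" using pt_mem_the_class_iff[OF s s'] by blast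
    have E1: "the_class (pt s u) \<in> D" "pt s u \<in> the_class (pt s u)" using the_class_in_D[OF pt_in_Gc] mem_the_class[OF pt_in_Gc] by auto
    have "\<bar>fst (pt s u)\<bar> = 1" using s by auto
    then obtain e m where em: "e = 1 \<or> e = -1" "m \<ge> 1" "m < p" "dil e (int m) (pt s u) = pt s' u'"
      "pt e (int m) \<in> W1" using transitive_level_1[OF E1(1) E1(2) _ h1] by blast
    have "pt (e * s) (int m * u) = pt s' u'" using em(4) dil_pt by simp
    then have "e * s = s'" "(int m * u) mod int p = u' mod int p" using pt_eq_iff by auto
    then have "dil e (int m) g = h" using gb hb as bs dil_pt pt_eq_iff by (simp add: mult.assoc)
    then show ?thesis using em by blast
  qed
qed

lemma automorphic_if_sum_zero: "automorphic F p D"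
proof (rule automorphic_if_aut_map_transitive)
  fix E g h assume E: "E \<in> D" and g: "g \<in> E" and h: "h \<in> E"
  obtain e m where em: "e = 1 \<or> e = -1" "m \<ge> 1" "m < p" "dil e (int m) g = h" "pt e (int m) \<in> W1"
    using transitive_dil[OF E g h] by blast
  have mp: "\<not> p dvd m" using em(2,3) by (auto dest: dvd_imp_le)
  then have "coprime (int m) (int p)"
    using prime_imp_coprime_nat[OF prime_p] by (simp add: coprime_commute)
  moreover have "\<forall>E'\<in>D. aut_map p e ((e - int m) * i) (int m) ` E' = E'"
    using dil_preserves_classes[OF em(1,2) mp em(5)] by (simp only: dil_def)
  moreover have "e \<in> {1, -1}" using em(1) by auto
  moreover have "aut_map p e ((e - int m) * i) (int m) g = h" using em(4) by (simp only: dil_def)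
  ultimately show "\<exists>e c m. e \<in> {1, -1} \<and> coprime m (int p) \<and>
      (\<forall>E'\<in>D. aut_map p e c m ` E' = E') \<and> aut_map p e c m g = h"
    by blast
qed

end

context sym_schur_ring
begin

lemma pair_class_shape:
  assumes C: "C \<in> D" "card C = 2" "C \<subseteq> ({1} \<times> {0..<int p}) \<union> ({-1} \<times> {0..<int p})"
  obtains i j where "C = {(1, i), (-1, j)}" "i \<in> {0..<int p}" "j \<in> {0..<int p}"
proof -
  obtain t where t: "fst ` C = {t, -t}" using class_fst_image[OF C(1)] by blast
  then have "t \<in> fst ` C" by simp
  then have "t = 1 \<or> t = -1" using C(3) by auto
  then have "1 \<in> fst ` C" "-1 \<in> fst ` C" using t by auto
  then obtain i j where i: "(1, i) \<in> C" and j: "(-1, j) \<in> C" by force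
  have "{(1, i), (-1, j)} \<subseteq> C" using i j by simp
  moreover have "card {(1::int, i), (-1, j)} = 2" by simp
  ultimately have "{(1, i), (-1, j)} = C"
    using card_subset_eq[OF class_finite[OF C(1)]] C(2) by metis
  moreover have "i \<in> {0..<int p}" "j \<in> {0..<int p}" using i j C(3) by auto
  ultimately show ?thesis using that by blast
qed

end

theorem corollary3p6:
  fixes F :: "'a::field_char_0 itself" and p :: nat and D :: "(int \<times> int) set set"
  assumes "prime p"
    and "schur_classes F p D"
    and "phi_classes D = sym_classes"
    and "\<exists>C\<in>D. card C = 2 \<and> C \<subseteq> ({1} \<times> {0..<int p}) \<union> ({-1} \<times> {0..<int p})"
  shows "automorphic F p D"
proof -
  interpret sym_schur_ring F p D
    using assms(1-3) by unfold_locales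
  obtain i j where "{(1, i), (-1, j)} \<in> D" "i \<in> {0..<int p}" "j \<in> {0..<int p}"
    using assms(4) pair_class_shape by metis
  then interpret sym_schur_ring_pair F p D i j
    by unfold_locales
  show ?thesis
  proof (cases "(i + j) mod int p = 0")
    case True
    then interpret sym_schur_ring_inverse_pair F p D i j
      by unfold_locales
    show ?thesis by (rule automorphic_if_sum_zero)
  next
    case False
    then show ?thesis by (rule automorphic_if_sum_nonzero)
  qed
qed

end
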